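(* Let $T:(E^\sharp,E)\to(F^\sharp,F)$ be a map of pairs of topological vector spaces, where $E$, $E^\sharp$, $F$ are DFS spaces, given as injective limits $E=\varinjlim E_j$, $E^\sharp=\varinjlim E^\sharp_k$, $F=\varinjlim F_k$ of injective sequences of Banach spaces with compact inclusion maps, such that $E\subset E^\sharp_0$ with continuous inclusion $E\hookrightarrow E^\sharp_0$, and where $F^\sharp$ is a Hausdorff topological vector space. If $T$ satisfies property $(\mathcal H)$, then $T:E\to F$ has closed range.
   Context: A pair of topological vector spaces $(E^\sharp,E)$ consists of a topological vector space $E^\sharp$ and a linear subspace $E\subset E^\sharp$ carrying a topology finer than the one induced from $E^\sharp$. A map of pairs $T:(E^\sharp,E)\to(F^\sharp,F)$ is a continuous linear map $T:E^\sharp\to F^\sharp$ with $T(E)\subset F$ such that the induced map $T:E\to F$ is continuous. $T$ satisfies property $(\mathcal H)$ if for every $u\in E^\sharp$ with $Tu\in F$ one has $u\in E$. A DFS space is the (locally convex) injective limit of an increasing sequence of Banach spaces whose inclusion maps are compact and injective. *)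

theory Defs
  imports "HOL-Analysis.Analysis"
begin

definition is_linear_on :: "'a::real_vector set \<Rightarrow> ('a \<Rightarrow> 'b::real_vector) \<Rightarrow> bool" where
  "is_linear_on S T \<longleftrightarrow>
     (\<forall>x\<in>S. \<forall>y\<in>S. T (x + y) = T x + T y) \<and> (\<forall>c. \<forall>x\<in>S. T (c *\<^sub>R x) = c *\<^sub>R T x)"

definition banach_on :: "'a::real_vector set \<Rightarrow> ('a \<Rightarrow> real) \<Rightarrow> bool" where
  "banach_on B N \<longleftrightarrow>
     subspace B \<and>
     (\<forall>x\<in>B. 0 \<le> N x) \<and> (\<forall>x\<in>B. N x = 0 \<longrightarrow> x = 0) \<and>
     (\<forall>x\<in>B. \<forall>y\<in>B. N (x + y) \<le> N x + N y) \<and>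
     (\<forall>c. \<forall>x\<in>B. N (c *\<^sub>R x) = \<bar>c\<bar> * N x) \<and>
     (\<forall>u::nat \<Rightarrow> 'a. (\<forall>n. u n \<in> B) \<and> (\<forall>e>0. \<exists>M. \<forall>m\<ge>M. \<forall>n\<ge>M. N (u m - u n) < e)
        \<longrightarrow> (\<exists>l\<in>B. (\<lambda>n. N (u n - l)) \<longlonglongrightarrow> 0))"

definition norm_topology :: "'a::real_vector set \<Rightarrow> ('a \<Rightarrow> real) \<Rightarrow> 'a topology" where
  "norm_topology B N = topology (\<lambda>U. U \<subseteq> B \<and>
      (\<forall>x\<in>U. \<exists>r>0. {y\<in>B. N (y - x) < r} \<subseteq> U))"

definition absolutely_convex :: "'a::real_vector set \<Rightarrow> bool" where
  "absolutely_convex V \<longleftrightarrow> convex V \<and> (\<forall>x\<in>V. \<forall>c. \<bar>c\<bar> \<le> 1 \<longrightarrow> c *\<^sub>R x \<in> V)"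

definition lc_inductive_limit :: "(nat \<Rightarrow> 'a::real_vector set) \<Rightarrow> (nat \<Rightarrow> 'a \<Rightarrow> real) \<Rightarrow> 'a topology" where
  "lc_inductive_limit Bs Ns = topology (\<lambda>U. U \<subseteq> (\<Union>j. Bs j) \<and>
      (\<forall>x\<in>U. \<exists>V. V \<subseteq> (\<Union>j. Bs j) \<and> absolutely_convex V \<and>
          (\<forall>j. \<exists>r>0. {y\<in>Bs j. Ns j y < r} \<subseteq> V) \<and> (\<lambda>v. x + v) ` V \<subseteq> U))"

definition compact_inclusion :: "'a::real_vector set \<Rightarrow> ('a \<Rightarrow> real) \<Rightarrow> 'a set \<Rightarrow> ('a \<Rightarrow> real) \<Rightarrow> bool" where
  "compact_inclusion B1 N1 B2 N2 \<longleftrightarrow> B1 \<subseteq> B2 \<and>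
     compactin (norm_topology B2 N2) (norm_topology B2 N2 closure_of {x\<in>B1. N1 x \<le> 1})"

definition DFS_limit :: "'a::real_vector set \<Rightarrow> 'a topology \<Rightarrow> (nat \<Rightarrow> 'a set) \<Rightarrow> (nat \<Rightarrow> 'a \<Rightarrow> real) \<Rightarrow> bool" where
  "DFS_limit E tau Bs Ns \<longleftrightarrow>
     (\<forall>j. banach_on (Bs j) (Ns j)) \<and>
     (\<forall>j. compact_inclusion (Bs j) (Ns j) (Bs (Suc j)) (Ns (Suc j))) \<and>
     E = (\<Union>j. Bs j) \<and> tau = lc_inductive_limit Bs Ns"

definition hausdorff_tvs :: "'a::real_vector set \<Rightarrow> 'a topology \<Rightarrow> bool" where
  "hausdorff_tvs S tau \<longleftrightarrow> subspace S \<and> topspace tau = S \<and> Hausdorff_space tau \<and>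
     continuous_map (prod_topology tau tau) tau (\<lambda>(x, y). x + y) \<and>
     continuous_map (prod_topology euclideanreal tau) tau (\<lambda>(c, x). c *\<^sub>R x)"

end

theory Submission
  imports Defs
begin

text \<open>
  It suffices to show that \<open>T ` E\<close> is sequentially closed in every step \<open>F\<^sub>p\<close>: in a DFS
  space a set \<open>M\<close> with this property is closed, because around a point \<open>y \<notin> M\<close> of \<open>F\<^sub>m\<close> one can
  build the absolutely convex neighbourhood \<open>y + \<Union>\<^sub>n (B\<^sub>m(\<epsilon>\<^sub>0) + \<dots> + B\<^sub>m\<^sub>+\<^sub>n(\<epsilon>\<^sub>n))\<close>, choosing
  every radius so small that, thanks to the compact inclusions, the partial sums stay relatively
  compact in the next step and at positive distance from \<open>M\<close>.

  For fixed \<open>p\<close>, the graph domain \<open>G = {u \<in> E\<^sup>\<sharp>\<^sub>0. T u \<in> F\<^sub>p}\<close> with the graph norm is a Banach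
  space (the graph of \<open>T\<close> is closed since \<open>F\<^sup>\<sharp>\<close> is Hausdorff). By property (H), \<open>G\<close> is covered by
  the closed sets \<open>m K\<^sub>j\<close>, where \<open>K\<^sub>j\<close> is the closure of the unit ball of \<open>E\<^sub>j\<close> in \<open>E\<^sub>j\<^sub>+\<^sub>1\<close>, so
  by Baire's theorem \<open>G\<close> embeds continuously into some \<open>E\<^sub>j\<close>. The compactness of the next inclusion
  then turns bounded sequences of \<open>G\<close> with convergent images into sequences with convergent
  subsequences, which gives \<open>dist(u, ker T) \<le> C \<parallel>T u\<parallel>\<close> and hence the closedness of the range.
\<close>

lemma tendsto_zero_squeeze:
  fixes f g :: "nat \<Rightarrow> real"
  assumes "\<And>n. 0 \<le> f n" "\<And>n. f n \<le> g n" "g \<longlonglongrightarrow> 0"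
  shows "f \<longlonglongrightarrow> 0"
  by (rule Lim_null_comparison[of f g]) (use assms in auto)

lemma tendsto_zero_eventually_less:
  fixes f :: "nat \<Rightarrow> real"
  assumes "f \<longlonglongrightarrow> 0" "e > 0"
  obtains M where "\<And>n. n \<ge> M \<Longrightarrow> f n < e"
  using order_tendstoD(2)[OF assms] unfolding eventually_sequentially by blast

lemma istopology_norm_balls:
  fixes N :: "'a::real_vector \<Rightarrow> real"
  shows "istopology (\<lambda>U. U \<subseteq> B \<and> (\<forall>x\<in>U. \<exists>r>0. {y\<in>B. N (y - x) < r} \<subseteq> U))"
  unfolding istopology_def
proof (rule conjI; intro allI impI)
  fix S T
  assume S: "S \<subseteq> B \<and> (\<forall>x\<in>S. \<exists>r>0. {y\<in>B. N (y - x) < r} \<subseteq> S)"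
    and T: "T \<subseteq> B \<and> (\<forall>x\<in>T. \<exists>r>0. {y\<in>B. N (y - x) < r} \<subseteq> T)"
  show "S \<inter> T \<subseteq> B \<and> (\<forall>x\<in>S \<inter> T. \<exists>r>0. {y\<in>B. N (y - x) < r} \<subseteq> S \<inter> T)"
  proof (intro conjI ballI)
    show "S \<inter> T \<subseteq> B" using S by blast
    fix x assume "x \<in> S \<inter> T"
    then obtain r1 r2 where "r1 > 0" "{y\<in>B. N (y - x) < r1} \<subseteq> S" "r2 > 0" "{y\<in>B. N (y - x) < r2} \<subseteq> T"
      using S T by blast
    then show "\<exists>r>0. {y\<in>B. N (y - x) < r} \<subseteq> S \<inter> T"
      by (intro exI[of _ "min r1 r2"]) auto
  qed
next
  fix K assume "\<forall>S\<in>K. S \<subseteq> B \<and> (\<forall>x\<in>S. \<exists>r>0. {y\<in>B. N (y - x) < r} \<subseteq> S)"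
  then show "\<Union>K \<subseteq> B \<and> (\<forall>x\<in>\<Union>K. \<exists>r>0. {y\<in>B. N (y - x) < r} \<subseteq> \<Union>K)"
    by (meson Union_least Union_upper UnionE order_trans)
qed

lemma openin_norm_topology:
  "openin (norm_topology B N) U \<longleftrightarrow> U \<subseteq> B \<and> (\<forall>x\<in>U. \<exists>r>0. {y\<in>B. N (y - x) < r} \<subseteq> U)"
  unfolding norm_topology_def topology_inverse'[OF istopology_norm_balls] by simp

lemma topspace_norm_topology [simp]: "topspace (norm_topology B N) = B"
proof -
  have "openin (norm_topology B N) B"
    unfolding openin_norm_topology by (auto intro: exI[of _ 1])
  then show ?thesis
    using openin_subset[of "norm_topology B N"] openin_norm_topology
    by (metis openin_topspace subset_antisym)
qed

lemma absolutely_convex_Int: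
  "absolutely_convex A \<Longrightarrow> absolutely_convex C \<Longrightarrow> absolutely_convex (A \<inter> C)"
  unfolding absolutely_convex_def by (auto intro: convex_Int)

lemma absolutely_convex_sums:
  assumes "absolutely_convex A" "absolutely_convex C"
  shows "absolutely_convex {a + c | a c. a \<in> A \<and> c \<in> C}"
proof -
  have cA: "convex A" using assms(1) unfolding absolutely_convex_def by (rule conjunct1)
  have cC: "convex C" using assms(2) unfolding absolutely_convex_def by (rule conjunct1)
  have eq: "{a + c | a c. a \<in> A \<and> c \<in> C} = (\<Union>x\<in>A. \<Union>y\<in>C. {x + y})" by auto
  have cv: "convex {a + c | a c. a \<in> A \<and> c \<in> C}"
    unfolding eq by (rule convex_sums[OF cA cC])
  have "t *\<^sub>R x \<in> {a + c | a c. a \<in> A \<and> c \<in> C}"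
    if x: "x \<in> {a + c | a c. a \<in> A \<and> c \<in> C}" and t: "\<bar>t\<bar> \<le> 1" for x and t :: real
  proof -
    obtain a c where ac: "x = a + c" "a \<in> A" "c \<in> C" using x by blast
    have sA: "\<forall>x\<in>A. \<forall>c. \<bar>c\<bar> \<le> 1 \<longrightarrow> c *\<^sub>R x \<in> A" using assms(1) unfolding absolutely_convex_def by (rule conjunct2)
    have sC: "\<forall>x\<in>C. \<forall>c. \<bar>c\<bar> \<le> 1 \<longrightarrow> c *\<^sub>R x \<in> C" using assms(2) unfolding absolutely_convex_def by (rule conjunct2)
    have "t *\<^sub>R a \<in> A" using sA ac(2) t by simp
    moreover have "t *\<^sub>R c \<in> C" using sC ac(3) t by simp
    moreover have "t *\<^sub>R x = t *\<^sub>R a + t *\<^sub>R c" using ac by (simp add: scaleR_right_distrib)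
    ultimately show ?thesis using ac by auto
  qed
  then show ?thesis unfolding absolutely_convex_def using cv by simp
qed

lemma absolutely_convex_Union_chain:
  assumes ac: "\<And>n. absolutely_convex (D n)" and mono: "incseq D"
  shows "absolutely_convex (\<Union>n. D n)"
proof -
  have "convex (\<Union>n. D n)"
    unfolding convex_def
  proof (intro ballI allI impI)
    fix x z and u v :: real
    assume x: "x \<in> (\<Union>n. D n)" and z: "z \<in> (\<Union>n. D n)" and uv: "0 \<le> u" "0 \<le> v" "u + v = 1"
    obtain i k where "x \<in> D i" "z \<in> D k" using x z by blast
    then have "x \<in> D (max i k)" "z \<in> D (max i k)"
      using monoD[OF mono, of i "max i k"] monoD[OF mono, of k "max i k"] by auto
    moreover have "convex (D (max i k))"
      using ac unfolding absolutely_convex_def by blast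
    ultimately have "u *\<^sub>R x + v *\<^sub>R z \<in> D (max i k)"
      using uv unfolding convex_def by blast
    then show "u *\<^sub>R x + v *\<^sub>R z \<in> (\<Union>n. D n)" by blast
  qed
  moreover have "c *\<^sub>R x \<in> (\<Union>n. D n)" if "x \<in> (\<Union>n. D n)" "\<bar>c\<bar> \<le> 1" for x c
    using that ac unfolding absolutely_convex_def by blast
  ultimately show ?thesis
    unfolding absolutely_convex_def by blast
qed

definition lc_zero_nbhd :: "(nat \<Rightarrow> 'a::real_vector set) \<Rightarrow> (nat \<Rightarrow> 'a \<Rightarrow> real) \<Rightarrow> 'a set \<Rightarrow> bool" where
  "lc_zero_nbhd Bs Ns V \<longleftrightarrow> V \<subseteq> (\<Union>j. Bs j) \<and> absolutely_convex V \<and>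
     (\<forall>j. \<exists>r>0. {y\<in>Bs j. Ns j y < r} \<subseteq> V)"

lemma lc_zero_nbhd_Int:
  assumes V: "lc_zero_nbhd Bs Ns V" and W: "lc_zero_nbhd Bs Ns W"
  shows "lc_zero_nbhd Bs Ns (V \<inter> W)"
  unfolding lc_zero_nbhd_def
proof (intro conjI allI)
  show "V \<inter> W \<subseteq> (\<Union>j. Bs j)" using V unfolding lc_zero_nbhd_def by blast
  show "absolutely_convex (V \<inter> W)"
    using V W absolutely_convex_Int unfolding lc_zero_nbhd_def by blast
  fix j
  obtain r1 r2 where "r1 > 0" "{y\<in>Bs j. Ns j y < r1} \<subseteq> V" "r2 > 0" "{y\<in>Bs j. Ns j y < r2} \<subseteq> W"
    using V W unfolding lc_zero_nbhd_def by meson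
  then show "\<exists>r>0. {y\<in>Bs j. Ns j y < r} \<subseteq> V \<inter> W"
    by (intro exI[of _ "min r1 r2"]) auto
qed

lemma istopology_lc_zero_nbhds:
  "istopology (\<lambda>U. U \<subseteq> (\<Union>j. Bs j) \<and> (\<forall>x\<in>U. \<exists>V. lc_zero_nbhd Bs Ns V \<and> (\<lambda>v. x + v) ` V \<subseteq> U))"
  unfolding istopology_def
proof (rule conjI; intro allI impI)
  fix S T
  assume S: "S \<subseteq> (\<Union>j. Bs j) \<and> (\<forall>x\<in>S. \<exists>V. lc_zero_nbhd Bs Ns V \<and> (\<lambda>v. x + v) ` V \<subseteq> S)"
    and T: "T \<subseteq> (\<Union>j. Bs j) \<and> (\<forall>x\<in>T. \<exists>V. lc_zero_nbhd Bs Ns V \<and> (\<lambda>v. x + v) ` V \<subseteq> T)"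
  show "S \<inter> T \<subseteq> (\<Union>j. Bs j) \<and> (\<forall>x\<in>S \<inter> T. \<exists>V. lc_zero_nbhd Bs Ns V \<and> (\<lambda>v. x + v) ` V \<subseteq> S \<inter> T)"
  proof (intro conjI ballI)
    show "S \<inter> T \<subseteq> (\<Union>j. Bs j)" using S by blast
    fix x assume "x \<in> S \<inter> T"
    then obtain V W where "lc_zero_nbhd Bs Ns V" "(\<lambda>v. x + v) ` V \<subseteq> S"
        "lc_zero_nbhd Bs Ns W" "(\<lambda>v. x + v) ` W \<subseteq> T"
      using S T by blast
    then show "\<exists>V. lc_zero_nbhd Bs Ns V \<and> (\<lambda>v. x + v) ` V \<subseteq> S \<inter> T"
      by (intro exI[of _ "V \<inter> W"]) (auto intro: lc_zero_nbhd_Int)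
  qed
next
  fix K assume "\<forall>S\<in>K. S \<subseteq> (\<Union>j. Bs j) \<and> (\<forall>x\<in>S. \<exists>V. lc_zero_nbhd Bs Ns V \<and> (\<lambda>v. x + v) ` V \<subseteq> S)"
  then show "\<Union>K \<subseteq> (\<Union>j. Bs j) \<and> (\<forall>x\<in>\<Union>K. \<exists>V. lc_zero_nbhd Bs Ns V \<and> (\<lambda>v. x + v) ` V \<subseteq> \<Union>K)"
    by (meson Union_least Union_upper UnionE order_trans)
qed

lemma openin_lc_inductive_limit:
  "openin (lc_inductive_limit Bs Ns) U \<longleftrightarrow>
     U \<subseteq> (\<Union>j. Bs j) \<and> (\<forall>x\<in>U. \<exists>V. lc_zero_nbhd Bs Ns V \<and> (\<lambda>v. x + v) ` V \<subseteq> U)"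
proof -
  have "lc_inductive_limit Bs Ns = topology (\<lambda>U. U \<subseteq> (\<Union>j. Bs j) \<and>
      (\<forall>x\<in>U. \<exists>V. lc_zero_nbhd Bs Ns V \<and> (\<lambda>v. x + v) ` V \<subseteq> U))"
    unfolding lc_inductive_limit_def lc_zero_nbhd_def by (simp add: conj_assoc)
  then show ?thesis
    by (simp only: topology_inverse'[OF istopology_lc_zero_nbhds])
qed

locale banach_subspace =
  fixes B :: "'a::real_vector set" and N :: "'a \<Rightarrow> real"
  assumes banach: "banach_on B N"
begin

lemma subspace_B: "subspace B"
  using banach unfolding banach_on_def by simp

lemma norm_nonneg: "x \<in> B \<Longrightarrow> 0 \<le> N x"
  using banach unfolding banach_on_def by simp

lemma norm_eq_zeroD: "x \<in> B \<Longrightarrow> N x = 0 \<Longrightarrow> x = 0"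
  using banach unfolding banach_on_def by simp

lemma norm_triangle: "x \<in> B \<Longrightarrow> y \<in> B \<Longrightarrow> N (x + y) \<le> N x + N y"
  using banach unfolding banach_on_def by simp

lemma norm_scaleR: "x \<in> B \<Longrightarrow> N (c *\<^sub>R x) = \<bar>c\<bar> * N x"
  using banach unfolding banach_on_def by simp

lemma Cauchy_convergent:
  fixes u :: "nat \<Rightarrow> 'a"
  assumes "\<And>n. u n \<in> B" "\<And>e. e > 0 \<Longrightarrow> \<exists>M. \<forall>m\<ge>M. \<forall>n\<ge>M. N (u m - u n) < e"
  shows "\<exists>l\<in>B. (\<lambda>n. N (u n - l)) \<longlonglongrightarrow> 0"
proof -
  have "(\<forall>n. u n \<in> B) \<and> (\<forall>e>0. \<exists>M. \<forall>m\<ge>M. \<forall>n\<ge>M. N (u m - u n) < e)"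
    using assms by blast
  then show ?thesis
    using banach unfolding banach_on_def by simp
qed

lemma zero_mem [simp]: "0 \<in> B" using subspace_B subspace_0 by blast
lemma add_mem: "x \<in> B \<Longrightarrow> y \<in> B \<Longrightarrow> x + y \<in> B" using subspace_B subspace_add by blast
lemma diff_mem: "x \<in> B \<Longrightarrow> y \<in> B \<Longrightarrow> x - y \<in> B" using subspace_B subspace_diff by blast
lemma scaleR_mem: "x \<in> B \<Longrightarrow> c *\<^sub>R x \<in> B" using subspace_B subspace_scale by blast
lemma uminus_mem: "x \<in> B \<Longrightarrow> - x \<in> B" using subspace_B subspace_neg by blast

lemma norm_zero [simp]: "N 0 = 0" using norm_scaleR[of 0 0] by simp
lemma norm_minus: "x \<in> B \<Longrightarrow> N (- x) = N x" using norm_scaleR[of x "-1"] by simp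
lemma norm_minus_commute: "x \<in> B \<Longrightarrow> y \<in> B \<Longrightarrow> N (x - y) = N (y - x)"
  using norm_minus[of "y - x"] diff_mem by simp
lemma norm_triangle_diff: "x \<in> B \<Longrightarrow> y \<in> B \<Longrightarrow> z \<in> B \<Longrightarrow> N (x - z) \<le> N (x - y) + N (y - z)"
  using norm_triangle[of "x - y" "y - z"] diff_mem by simp
lemma norm_le_add_diff: "x \<in> B \<Longrightarrow> y \<in> B \<Longrightarrow> N x \<le> N y + N (x - y)"
  using norm_triangle[of y "x - y"] diff_mem by simp
lemma norm_diff_le_add: "x \<in> B \<Longrightarrow> y \<in> B \<Longrightarrow> N (x - y) \<le> N x + N y"
  using norm_triangle[of x "- y"] uminus_mem norm_minus by simp

definition ndist :: "'a \<Rightarrow> 'a \<Rightarrow> real" where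
  "ndist x y = (if x \<in> B \<and> y \<in> B then N (x - y) else 0)"

lemma Metric_space_ndist: "Metric_space B ndist"
proof
  show "0 \<le> ndist x y" for x y
    unfolding ndist_def using norm_nonneg[OF diff_mem[of x y]] by simp
  show "ndist x y = ndist y x" for x y
    unfolding ndist_def using norm_minus_commute[of x y] by simp
  show "(ndist x y = 0) = (x = y)" if "x \<in> B" "y \<in> B" for x y
  proof
    assume "ndist x y = 0"
    then have "x - y = 0"
      using norm_eq_zeroD[OF diff_mem[OF that]] that unfolding ndist_def by simp
    then show "x = y" by simp
  qed (simp add: ndist_def)
  show "ndist x z \<le> ndist x y + ndist y z" if "x \<in> B" "y \<in> B" "z \<in> B" for x y z
    unfolding ndist_def using that norm_triangle_diff[of x y z] by simp
qed

lemma norm_topology_eq_mtopology: "norm_topology B N = Metric_space.mtopology B ndist"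
proof (rule topology_eq[THEN iffD2], intro allI)
  fix U
  have ball_eq: "{y\<in>B. N (y - x) < r} = Metric_space.mball B ndist x r" if "x \<in> B" for x r
    unfolding Metric_space.mball_def[OF Metric_space_ndist] ndist_def
    using that norm_minus_commute[of x] by auto
  show "openin (norm_topology B N) U = openin (Metric_space.mtopology B ndist) U"
  proof (cases "U \<subseteq> B")
    case True
    have "(\<exists>r>0. {y\<in>B. N (y - x) < r} \<subseteq> U) \<longleftrightarrow> (\<exists>r>0. Metric_space.mball B ndist x r \<subseteq> U)"
      if "x \<in> U" for x
      using ball_eq[of x] that True by (simp add: subset_iff)
    with True show ?thesis
      unfolding openin_norm_topology Metric_space.openin_mtopology[OF Metric_space_ndist]
      by (simp add: Ball_def)
  next
    case False
    then show ?thesis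
      unfolding openin_norm_topology Metric_space.openin_mtopology[OF Metric_space_ndist] by simp
  qed
qed

lemma limitin_norm_topology_iff:
  assumes "\<And>n. f n \<in> B"
  shows "limitin (norm_topology B N) f l sequentially \<longleftrightarrow> l \<in> B \<and> (\<lambda>n. N (f n - l)) \<longlonglongrightarrow> 0"
proof (cases "l \<in> B")
  case True
  then have "(\<lambda>n. ndist (f n) l) = (\<lambda>n. N (f n - l))"
    using assms unfolding ndist_def by auto
  then show ?thesis
    unfolding norm_topology_eq_mtopology Metric_space.limitin_metric_dist_null[OF Metric_space_ndist]
    using assms True by simp
next
  case False
  then show ?thesis
    unfolding norm_topology_eq_mtopology Metric_space.limitin_metric_dist_null[OF Metric_space_ndist]
    by simp
qed

lemma mcomplete_ndist: "Metric_space.mcomplete B ndist"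
  unfolding Metric_space.mcomplete_def[OF Metric_space_ndist]
proof (intro allI impI)
  fix \<sigma> :: "nat \<Rightarrow> 'a"
  assume "Metric_space.MCauchy B ndist \<sigma>"
  then have range: "range \<sigma> \<subseteq> B"
    and Cauchy: "\<forall>e>0. \<exists>M. \<forall>n n'. M \<le> n \<longrightarrow> M \<le> n' \<longrightarrow> ndist (\<sigma> n) (\<sigma> n') < e"
    unfolding Metric_space.MCauchy_def[OF Metric_space_ndist] by simp_all
  from range have \<sigma>B: "\<sigma> n \<in> B" for n by blast
  have Cauchy_N: "\<exists>M. \<forall>m\<ge>M. \<forall>n\<ge>M. N (\<sigma> m - \<sigma> n) < e" if e: "e > 0" for e
  proof -
    obtain M where "\<forall>n n'. M \<le> n \<longrightarrow> M \<le> n' \<longrightarrow> ndist (\<sigma> n) (\<sigma> n') < e"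
      using Cauchy e by blast
    then show ?thesis
      using \<sigma>B unfolding ndist_def by auto
  qed
  obtain l where "l \<in> B" "(\<lambda>n. N (\<sigma> n - l)) \<longlonglongrightarrow> 0"
    using Cauchy_convergent[OF \<sigma>B Cauchy_N] by blast
  then have "limitin (norm_topology B N) \<sigma> l sequentially"
    using limitin_norm_topology_iff[OF \<sigma>B] by simp
  then show "\<exists>x. limitin (Metric_space.mtopology B ndist) \<sigma> x sequentially"
    unfolding norm_topology_eq_mtopology by blast
qed

lemma limit_unique:
  assumes f: "\<And>n::nat. f n \<in> B" and ab: "a \<in> B" "b \<in> B"
    and la: "(\<lambda>n. N (f n - a)) \<longlonglongrightarrow> 0" and lb: "(\<lambda>n. N (f n - b)) \<longlonglongrightarrow> 0"
  shows "a = b"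
proof -
  have "limitin (norm_topology B N) f a sequentially" "limitin (norm_topology B N) f b sequentially"
    using limitin_norm_topology_iff[OF f] ab la lb by simp_all
  then have "limitin (Metric_space.mtopology B ndist) f a sequentially"
    "limitin (Metric_space.mtopology B ndist) f b sequentially"
    unfolding norm_topology_eq_mtopology .
  then show ?thesis
    by (rule Metric_space.limitin_metric_unique[OF Metric_space_ndist]) simp
qed

lemma limit_add:
  assumes "\<And>n. f n \<in> B" "\<And>n. g n \<in> B" "a \<in> B" "b \<in> B"
    and "(\<lambda>n. N (f n - a)) \<longlonglongrightarrow> 0" "(\<lambda>n. N (g n - b)) \<longlonglongrightarrow> 0"
  shows "(\<lambda>n. N (f n + g n - (a + b))) \<longlonglongrightarrow> 0"
proof (rule tendsto_zero_squeeze)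
  show "0 \<le> N (f n + g n - (a + b))" for n
    using assms by (simp add: add_mem diff_mem norm_nonneg)
  show "N (f n + g n - (a + b)) \<le> N (f n - a) + N (g n - b)" for n
    using norm_triangle[OF diff_mem[OF assms(1,3)] diff_mem[OF assms(2,4)]]
    by (simp add: algebra_simps)
  show "(\<lambda>n. N (f n - a) + N (g n - b)) \<longlonglongrightarrow> 0"
    using tendsto_add_zero assms(5,6) by blast
qed

lemma norm_limit_le:
  assumes f: "\<And>n. f n \<in> B" and w: "w \<in> B" and lim: "(\<lambda>n. N (f n - w)) \<longlonglongrightarrow> 0"
    and bound: "\<And>n. N (f n) \<le> r"
  shows "N w \<le> r"
proof (rule LIMSEQ_le_const)
  show "(\<lambda>n. r + N (f n - w)) \<longlonglongrightarrow> r"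
    using tendsto_add[OF tendsto_const lim] by simp
  have "N w \<le> r + N (f n - w)" for n
    using norm_le_add_diff[OF w f, of n] norm_minus_commute[OF w f, of n] bound[of n] by simp
  then show "\<exists>M. \<forall>n\<ge>M. N w \<le> r + N (f n - w)" by blast
qed

lemma absolutely_convex_ball: "absolutely_convex {x\<in>B. N x < e}"
proof -
  have cv: "convex {x\<in>B. N x < e}"
    unfolding convex_def
  proof (intro ballI allI impI)
    fix x z and u v :: real
    assume x: "x \<in> {x\<in>B. N x < e}" and z: "z \<in> {x\<in>B. N x < e}"
      and "0 \<le> u" "0 \<le> v" "u + v = 1"
    then have uv: "0 \<le> u \<and> 0 \<le> v \<and> u + v = 1" by simp
    have xB: "x \<in> B" "N x < e" and zB: "z \<in> B" "N z < e" using x z by auto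
    have mem: "u *\<^sub>R x + v *\<^sub>R z \<in> B" using add_mem[OF scaleR_mem[OF xB(1)] scaleR_mem[OF zB(1)]] .
    have "N (u *\<^sub>R x + v *\<^sub>R z) \<le> N (u *\<^sub>R x) + N (v *\<^sub>R z)"
      using norm_triangle[OF scaleR_mem[OF xB(1)] scaleR_mem[OF zB(1)]] .
    also have "\<dots> = u * N x + v * N z" using norm_scaleR xB zB uv by simp
    also have "\<dots> < e"
    proof (cases "u = 0")
      case True then show ?thesis using uv zB by simp
    next
      case False
      then have "u * N x < u * e" using uv xB by (simp add: mult_strict_left_mono)
      moreover have "v * N z \<le> v * e" using uv zB by (simp add: mult_left_mono)
      ultimately have "u * N x + v * N z < (u + v) * e" by (simp add: distrib_right)
      then show ?thesis using uv by simp
    qed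
    finally show "u *\<^sub>R x + v *\<^sub>R z \<in> {x\<in>B. N x < e}" using mem by simp
  qed
  have "c *\<^sub>R x \<in> {x\<in>B. N x < e}" if x: "x \<in> {x\<in>B. N x < e}" and c: "\<bar>c\<bar> \<le> 1" for x and c :: real
  proof -
    have "N (c *\<^sub>R x) = \<bar>c\<bar> * N x" using x norm_scaleR by simp
    also have "\<dots> \<le> N x" using c norm_nonneg[of x] x mult_left_le_one_le[of "N x" "\<bar>c\<bar>"] by auto
    finally show "c *\<^sub>R x \<in> {x\<in>B. N x < e}" using x scaleR_mem by auto
  qed
  then show ?thesis unfolding absolutely_convex_def using cv by simp
qed


lemma norm_bound_from_ball:
  assumes B': "banach_subspace B' N'" and \<rho>: "\<rho> > 0"
    and ball: "\<And>h. h \<in> B \<Longrightarrow> N h < \<rho> \<Longrightarrow> h \<in> B' \<and> N' h \<le> \<beta>"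
  shows "u \<in> B \<Longrightarrow> u \<in> B' \<and> N' u \<le> (2 * \<beta> / \<rho>) * N u"
proof -
  interpret B': banach_subspace B' N' by (rule B')
  assume u: "u \<in> B"
  show ?thesis
  proof (cases "N u = 0")
    case True
    then show ?thesis using norm_eq_zeroD[OF u] by simp
  next
    case False
    then have Nu: "N u > 0" using norm_nonneg[OF u] by simp
    define t where "t = \<rho> / (2 * N u)"
    have t: "t > 0" unfolding t_def using Nu \<rho> by simp
    have "N (t *\<^sub>R u) = \<rho> / 2"
      using norm_scaleR[OF u, of t] t Nu \<rho> unfolding t_def by simp
    then have tu: "t *\<^sub>R u \<in> B'" "N' (t *\<^sub>R u) \<le> \<beta>"
      using ball[OF scaleR_mem[OF u]] \<rho> by simp_all
    have "u = (1 / t) *\<^sub>R (t *\<^sub>R u)" using t by simp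
    then have uB': "u \<in> B'" using B'.scaleR_mem[OF tu(1)] by metis
    have "N' u = (1 / t) * N' (t *\<^sub>R u)"
      using B'.norm_scaleR[OF uB', of t] t by simp
    also have "\<dots> \<le> (1 / t) * \<beta>" using tu(2) t by (simp add: divide_right_mono)
    also have "\<dots> = (2 * \<beta> / \<rho>) * N u" unfolding t_def using Nu \<rho> by (simp add: field_simps)
    finally show ?thesis using uB' by simp
  qed
qed

end

section \<open>Injective sequences of Banach spaces with compact inclusions\<close>

locale dfs_sequence =
  fixes Bs :: "nat \<Rightarrow> 'a::real_vector set" and Ns :: "nat \<Rightarrow> 'a \<Rightarrow> real"
  assumes banach_step: "\<And>j. banach_on (Bs j) (Ns j)"
    and compact_step: "\<And>j. compact_inclusion (Bs j) (Ns j) (Bs (Suc j)) (Ns (Suc j))"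
begin

lemma banach_subspace_step: "banach_subspace (Bs j) (Ns j)"
  unfolding banach_subspace_def using banach_step .

lemma subset_Suc: "Bs j \<subseteq> Bs (Suc j)"
  using compact_step unfolding compact_inclusion_def by blast

lemma subset_mono: "j \<le> k \<Longrightarrow> Bs j \<subseteq> Bs k"
  using lift_Suc_mono_le[of Bs, OF subset_Suc] by blast

definition unit_ball_closure :: "nat \<Rightarrow> 'a set" where
  "unit_ball_closure j =
     norm_topology (Bs (Suc j)) (Ns (Suc j)) closure_of {x\<in>Bs j. Ns j x \<le> 1}"

lemma compactin_unit_ball_closure:
  "compactin (Metric_space.mtopology (Bs (Suc j)) (banach_subspace.ndist (Bs (Suc j)) (Ns (Suc j))))
     (unit_ball_closure j)"
  using compact_step[of j]
  unfolding compact_inclusion_def unit_ball_closure_def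
    banach_subspace.norm_topology_eq_mtopology[OF banach_subspace_step]
  by blast

lemma unit_ball_subset_closure: "{x\<in>Bs j. Ns j x \<le> 1} \<subseteq> unit_ball_closure j"
  unfolding unit_ball_closure_def
  by (rule closure_of_subset) (use subset_Suc[of j] in auto)

lemma unit_ball_closure_subset: "unit_ball_closure j \<subseteq> Bs (Suc j)"
  unfolding unit_ball_closure_def
  by (metis closure_of_subset_topspace topspace_norm_topology)

lemma unit_ball_closure_bounded: "\<exists>\<beta>>0. \<forall>x\<in>unit_ball_closure j. Ns (Suc j) x \<le> \<beta>"
proof -
  interpret S: banach_subspace "Bs (Suc j)" "Ns (Suc j)" by (rule banach_subspace_step)
  obtain \<beta> where \<beta>: "\<beta> > 0" "\<forall>x\<in>unit_ball_closure j. \<forall>y\<in>unit_ball_closure j. S.ndist x y \<le> \<beta>"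
    using Metric_space.compactin_imp_mbounded[OF S.Metric_space_ndist compactin_unit_ball_closure]
    unfolding Metric_space.mbounded_alt_pos[OF S.Metric_space_ndist] by blast
  have "0 \<in> unit_ball_closure j"
    using unit_ball_subset_closure[of j] banach_subspace.zero_mem[OF banach_subspace_step, of j]
      banach_subspace.norm_zero[OF banach_subspace_step, of j] by auto
  then have "Ns (Suc j) x \<le> \<beta>" if "x \<in> unit_ball_closure j" for x
    using \<beta>(2) that unit_ball_closure_subset unfolding S.ndist_def by fastforce
  with \<beta>(1) show ?thesis by blast
qed

lemma unit_ball_closure_seq_compact:
  fixes z :: "nat \<Rightarrow> 'a"
  assumes z: "\<And>n. z n \<in> unit_ball_closure j"
  obtains r l where "strict_mono r" "l \<in> unit_ball_closure j" "(\<lambda>n. Ns (Suc j) (z (r n) - l)) \<longlonglongrightarrow> 0"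
proof -
  interpret S: banach_subspace "Bs (Suc j)" "Ns (Suc j)" by (rule banach_subspace_step)
  have seq_compact: "\<forall>\<sigma>::nat \<Rightarrow> 'a. range \<sigma> \<subseteq> unit_ball_closure j \<longrightarrow> (\<exists>l r. l \<in> unit_ball_closure j \<and>
      strict_mono r \<and> limitin (Metric_space.mtopology (Bs (Suc j)) S.ndist) (\<sigma> \<circ> r) l sequentially)"
    using compactin_unit_ball_closure[of j]
    unfolding Metric_space.compactin_sequentially[OF S.Metric_space_ndist] by (elim conjE)
  have "range z \<subseteq> unit_ball_closure j" using z by blast
  from mp[OF spec[OF seq_compact, of z] this]
  obtain l r where l: "l \<in> unit_ball_closure j" and r: "strict_mono r"
      and lim: "limitin (Metric_space.mtopology (Bs (Suc j)) S.ndist) (z \<circ> r) l sequentially"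
    by blast
  have zr: "(z \<circ> r) n \<in> Bs (Suc j)" for n
    using z unit_ball_closure_subset by auto
  have "(\<lambda>n. Ns (Suc j) ((z \<circ> r) n - l)) \<longlonglongrightarrow> 0"
    using lim unfolding S.norm_topology_eq_mtopology[symmetric] S.limitin_norm_topology_iff[OF zr]
    by blast
  then show ?thesis
    using that[OF r l] by (simp add: comp_def)
qed

lemma norm_Suc_le: "\<exists>c>0. \<forall>x\<in>Bs j. Ns (Suc j) x \<le> c * Ns j x"
proof -
  obtain \<beta> where \<beta>: "\<beta> > 0" "\<forall>x\<in>unit_ball_closure j. Ns (Suc j) x \<le> \<beta>"
    using unit_ball_closure_bounded by blast
  have "h \<in> Bs (Suc j) \<and> Ns (Suc j) h \<le> \<beta>" if "h \<in> Bs j" "Ns j h < 1" for h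
    using that unit_ball_subset_closure[of j] unit_ball_closure_subset[of j] \<beta>(2) by auto
  then have "\<forall>x\<in>Bs j. Ns (Suc j) x \<le> (2 * \<beta> / 1) * Ns j x"
    using banach_subspace.norm_bound_from_ball[OF banach_subspace_step banach_subspace_step, of 1] by simp
  moreover have "2 * \<beta> / 1 > 0" using \<beta>(1) by simp
  ultimately show ?thesis by blast
qed

lemma norm_le_mono: "j \<le> k \<Longrightarrow> \<exists>c>0. \<forall>x\<in>Bs j. Ns k x \<le> c * Ns j x"
proof (induction k rule: dec_induct)
  case base
  show ?case by (intro exI[of _ 1]) simp
next
  case (step k)
  then obtain c where c: "c > 0" "\<forall>x\<in>Bs j. Ns k x \<le> c * Ns j x" by blast
  obtain c' where c': "c' > 0" "\<forall>x\<in>Bs k. Ns (Suc k) x \<le> c' * Ns k x"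
    using norm_Suc_le by blast
  have "Ns (Suc k) x \<le> (c' * c) * Ns j x" if "x \<in> Bs j" for x
  proof -
    have "Ns (Suc k) x \<le> c' * Ns k x" using c' subset_mono[OF step(1)] that by blast
    also have "\<dots> \<le> c' * (c * Ns j x)" using c that c' by (simp add: mult_left_mono)
    finally show ?thesis by simp
  qed
  then show ?case using c c' by (intro exI[of _ "c' * c"]) simp
qed

lemma bounded_seq_converging_subseq:
  fixes x :: "nat \<Rightarrow> 'a"
  assumes x: "\<And>n. x n \<in> Bs j" "\<And>n. Ns j (x n) \<le> R"
  obtains r l where "strict_mono r" "l \<in> Bs (Suc j)" "(\<lambda>n. Ns (Suc j) (x (r n) - l)) \<longlonglongrightarrow> 0"
proof -
  interpret S: banach_subspace "Bs (Suc j)" "Ns (Suc j)" by (rule banach_subspace_step)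
  interpret J: banach_subspace "Bs j" "Ns j" by (rule banach_subspace_step)
  define R' where "R' = max R 1"
  have R': "R' > 0" "R \<le> R'" unfolding R'_def by auto
  define y where "y n = (1 / R') *\<^sub>R x n" for n
  have "y n \<in> unit_ball_closure j" for n
  proof -
    have "Ns j (y n) = Ns j (x n) / R'" unfolding y_def using J.norm_scaleR[OF x(1)] R' by simp
    also have "\<dots> \<le> 1" using x(2)[of n] R' by simp
    finally show ?thesis
      using unit_ball_subset_closure[of j] J.scaleR_mem[OF x(1)] unfolding y_def by auto
  qed
  then obtain r l where r: "strict_mono r" and l: "l \<in> unit_ball_closure j"
    and lim: "(\<lambda>n. Ns (Suc j) (y (r n) - l)) \<longlonglongrightarrow> 0"
    by (rule unit_ball_closure_seq_compact)
  have lS: "l \<in> Bs (Suc j)" using l unit_ball_closure_subset by blast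
  have yS: "y (r n) \<in> Bs (Suc j)" for n
    using J.scaleR_mem[OF x(1)] subset_Suc unfolding y_def by blast
  have "Ns (Suc j) (x (r n) - R' *\<^sub>R l) = R' * Ns (Suc j) (y (r n) - l)" for n
  proof -
    have "x (r n) - R' *\<^sub>R l = R' *\<^sub>R (y (r n) - l)"
      unfolding y_def using R' by (simp add: algebra_simps)
    then show ?thesis using S.norm_scaleR[OF S.diff_mem[OF yS lS], of R'] R' by simp
  qed
  then have "(\<lambda>n. Ns (Suc j) (x (r n) - R' *\<^sub>R l)) \<longlonglongrightarrow> 0"
    using tendsto_mult_right_zero[OF lim, of R'] by simp
  then show ?thesis
    using that[OF r S.scaleR_mem[OF lS]] by blast
qed

lemma subspace_Union: "subspace (\<Union>j. Bs j)"
  unfolding subspace_def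
proof (intro conjI ballI allI)
  show "0 \<in> (\<Union>j. Bs j)"
    using banach_subspace.zero_mem[OF banach_subspace_step] by blast
  fix x y assume "x \<in> (\<Union>j. Bs j)" "y \<in> (\<Union>j. Bs j)"
  then obtain i k where "x \<in> Bs i" "y \<in> Bs k" by blast
  then have "x \<in> Bs (max i k)" "y \<in> Bs (max i k)"
    using subset_mono[of i "max i k"] subset_mono[of k "max i k"] by auto
  then show "x + y \<in> (\<Union>j. Bs j)"
    using banach_subspace.add_mem[OF banach_subspace_step] by blast
next
  fix c x assume "x \<in> (\<Union>j. Bs j)"
  then show "c *\<^sub>R x \<in> (\<Union>j. Bs j)"
    using banach_subspace.scaleR_mem[OF banach_subspace_step] by blast
qed

lemma topspace_lc_inductive_limit [simp]: "topspace (lc_inductive_limit Bs Ns) = (\<Union>j. Bs j)"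
proof -
  have "lc_zero_nbhd Bs Ns (\<Union>j. Bs j)"
    unfolding lc_zero_nbhd_def absolutely_convex_def
  proof (intro conjI ballI allI impI)
    show "convex (\<Union>j. Bs j)" using subspace_Union by (rule subspace_imp_convex)
    show "c *\<^sub>R x \<in> (\<Union>j. Bs j)" if "x \<in> (\<Union>j. Bs j)" for x c
      using subspace_Union that by (rule subspace_scale)
    show "\<exists>r>0. {y \<in> Bs j. Ns j y < r} \<subseteq> (\<Union>j. Bs j)" for j
      by (intro exI[of _ 1]) auto
  qed simp
  moreover have "(\<lambda>v. x + v) ` (\<Union>j. Bs j) \<subseteq> (\<Union>j. Bs j)" if "x \<in> (\<Union>j. Bs j)" for x
    using subspace_Union subspace_add that by blast
  ultimately have "openin (lc_inductive_limit Bs Ns) (\<Union>j. Bs j)"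
    unfolding openin_lc_inductive_limit by blast
  then show ?thesis
    using openin_subset openin_topspace openin_lc_inductive_limit by (metis subset_antisym)
qed

lemma continuous_map_step_inclusion:
  "continuous_map (norm_topology (Bs j) (Ns j)) (lc_inductive_limit Bs Ns) id"
  unfolding continuous_map_def
proof (intro conjI allI impI)
  show "id \<in> topspace (norm_topology (Bs j) (Ns j)) \<rightarrow> topspace (lc_inductive_limit Bs Ns)"
    by auto
  fix U assume U: "openin (lc_inductive_limit Bs Ns) U"
  show "openin (norm_topology (Bs j) (Ns j)) {x \<in> topspace (norm_topology (Bs j) (Ns j)). id x \<in> U}"
    unfolding openin_norm_topology
  proof (intro conjI ballI)
    fix x assume x: "x \<in> {x \<in> topspace (norm_topology (Bs j) (Ns j)). id x \<in> U}"
    then obtain V where "lc_zero_nbhd Bs Ns V" and V: "(\<lambda>v. x + v) ` V \<subseteq> U"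
      using U unfolding openin_lc_inductive_limit by auto
    then obtain r where r: "r > 0" "{y\<in>Bs j. Ns j y < r} \<subseteq> V"
      unfolding lc_zero_nbhd_def by blast
    have "y \<in> U" if "y \<in> Bs j" "Ns j (y - x) < r" for y
    proof -
      have "y - x \<in> V"
        using r that x banach_subspace.diff_mem[OF banach_subspace_step, of y j x] by auto
      then show ?thesis using V by force
    qed
    then show "\<exists>r>0. {y \<in> Bs j. Ns j (y - x) < r}
        \<subseteq> {x \<in> topspace (norm_topology (Bs j) (Ns j)). id x \<in> U}"
      using r by auto
  qed auto
qed

end

section \<open>Stepwise sequentially closed sets are closed in the inductive limit\<close>

lemma (in banach_subspace) limit_plus_small_avoids:
  assumes gap: "\<forall>a\<in>S. \<forall>b\<in>B. N b < \<delta> \<longrightarrow> a + b \<notin> M" and S: "S \<subseteq> B"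
    and a: "\<And>n. a n \<in> S" and z: "z \<in> B" and lim: "(\<lambda>n. N (a n - z)) \<longlonglongrightarrow> 0"
    and w: "w \<in> B" "N w < \<delta>"
  shows "z + w \<notin> M"
proof -
  have "\<delta> - N w > 0" using w by simp
  then obtain k where k: "\<And>n. n \<ge> k \<Longrightarrow> N (a n - z) < \<delta> - N w"
    using tendsto_zero_eventually_less[OF lim] by blast
  have ak: "a k \<in> B" using a S by blast
  have "N (z + w - a k) \<le> N (z - a k) + N w"
    using norm_triangle[OF diff_mem[OF z ak] w(1)] by (simp add: algebra_simps)
  also have "\<dots> < \<delta>"
    using k[of k] norm_minus_commute[OF z ak] by simp
  finally have "N (z + w - a k) < \<delta>" .
  moreover have "z + w - a k \<in> B"
    using add_mem[OF diff_mem[OF z ak] w(1)] by (simp add: algebra_simps)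
  ultimately have "a k + (z + w - a k) \<notin> M"
    using gap a[of k] by blast
  then show ?thesis by simp
qed

context dfs_sequence
begin

definition step_ball :: "nat \<Rightarrow> real \<Rightarrow> 'a set" where
  "step_ball p e = {x\<in>Bs p. Ns p x < e}"

definition thickening :: "nat \<Rightarrow> 'a set \<Rightarrow> real \<Rightarrow> 'a set" where
  "thickening p S e = {a + b | a b. a \<in> S \<and> b \<in> step_ball p e}"

definition stepwise_seq_closed :: "'a set \<Rightarrow> bool" where
  "stepwise_seq_closed M \<longleftrightarrow> (\<forall>p z s. (\<forall>n::nat. s n \<in> M \<inter> Bs p) \<longrightarrow> z \<in> Bs p \<longrightarrow>
     (\<lambda>n. Ns p (s n - z)) \<longlonglongrightarrow> 0 \<longrightarrow> z \<in> M)"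

definition relcompact_avoiding :: "'a set \<Rightarrow> nat \<Rightarrow> 'a set \<Rightarrow> bool" where
  "relcompact_avoiding M p S \<longleftrightarrow> S \<subseteq> Bs p \<and> (\<forall>s. (\<forall>n::nat. s n \<in> S) \<longrightarrow>
     (\<exists>r z. strict_mono r \<and> z \<in> Bs p \<and> z \<notin> M \<and> (\<lambda>n. Ns p (s (r n) - z)) \<longlonglongrightarrow> 0))"

lemma stepwise_seq_closedD:
  fixes s :: "nat \<Rightarrow> 'a"
  assumes "stepwise_seq_closed M" "\<And>n. s n \<in> M" "\<And>n. s n \<in> Bs p" "z \<in> Bs p"
    and "(\<lambda>n. Ns p (s n - z)) \<longlonglongrightarrow> 0"
  shows "z \<in> M"
proof -
  have "(\<forall>n::nat. s n \<in> M \<inter> Bs p) \<longrightarrow> z \<in> Bs p \<longrightarrow> (\<lambda>n. Ns p (s n - z)) \<longlonglongrightarrow> 0 \<longrightarrow> z \<in> M"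
    using assms(1) unfolding stepwise_seq_closed_def by blast
  then show ?thesis using assms(2-5) by blast
qed

lemma relcompact_avoidingI:
  assumes "S \<subseteq> Bs p" and "\<And>s. (\<And>n::nat. s n \<in> S) \<Longrightarrow>
     \<exists>r z. strict_mono r \<and> z \<in> Bs p \<and> z \<notin> M \<and> (\<lambda>n. Ns p (s (r n) - z)) \<longlonglongrightarrow> 0"
  shows "relcompact_avoiding M p S"
  using assms unfolding relcompact_avoiding_def by blast

lemma relcompact_avoiding_subset: "relcompact_avoiding M p S \<Longrightarrow> S \<subseteq> Bs p"
  unfolding relcompact_avoiding_def by blast

lemma relcompact_avoidingD:
  fixes s :: "nat \<Rightarrow> 'a"
  assumes "relcompact_avoiding M p S" "\<And>n. s n \<in> S"
  obtains r z where "strict_mono r" "z \<in> Bs p" "z \<notin> M" "(\<lambda>n. Ns p (s (r n) - z)) \<longlonglongrightarrow> 0"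
proof -
  have "(\<forall>n. s n \<in> S) \<longrightarrow>
      (\<exists>r z. strict_mono r \<and> z \<in> Bs p \<and> z \<notin> M \<and> (\<lambda>n. Ns p (s (r n) - z)) \<longlonglongrightarrow> 0)"
    using assms(1) unfolding relcompact_avoiding_def by blast
  then show ?thesis using assms(2) that by blast
qed

lemma relcompact_avoiding_disjoint:
  assumes "relcompact_avoiding M p S" "x \<in> S"
  shows "x \<notin> M"
proof -
  interpret P: banach_subspace "Bs p" "Ns p" by (rule banach_subspace_step)
  obtain z where z: "z \<in> Bs p" "z \<notin> M" and "(\<lambda>n::nat. Ns p (x - z)) \<longlonglongrightarrow> 0"
    using relcompact_avoidingD[OF assms(1), of "\<lambda>_. x"] assms(2) by blast
  then have "Ns p (x - z) = 0" by (simp add: LIMSEQ_const_iff)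
  moreover have "x \<in> Bs p" using relcompact_avoiding_subset[OF assms(1)] assms(2) by blast
  ultimately have "x = z" using P.norm_eq_zeroD P.diff_mem z(1) by fastforce
  then show ?thesis using z(2) by simp
qed

lemma relcompact_avoiding_singleton: "y \<in> Bs p \<Longrightarrow> y \<notin> M \<Longrightarrow> relcompact_avoiding M p {y}"
  by (rule relcompact_avoidingI) (auto intro!: exI[of _ "\<lambda>n. n"] exI[of _ y]
      simp: strict_mono_def banach_subspace.norm_zero[OF banach_subspace_step])

lemma relcompact_avoiding_Suc:
  assumes S: "relcompact_avoiding M p S"
  shows "relcompact_avoiding M (Suc p) S"
proof (rule relcompact_avoidingI)
  interpret P: banach_subspace "Bs p" "Ns p" by (rule banach_subspace_step)
  interpret Q: banach_subspace "Bs (Suc p)" "Ns (Suc p)" by (rule banach_subspace_step)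
  have Sp: "S \<subseteq> Bs p" by (rule relcompact_avoiding_subset[OF S])
  then show "S \<subseteq> Bs (Suc p)" using subset_Suc[of p] by blast
  obtain c where c: "c > 0" "\<forall>x\<in>Bs p. Ns (Suc p) x \<le> c * Ns p x"
    using norm_Suc_le[of p] by blast
  fix s :: "nat \<Rightarrow> 'a" assume s: "\<And>n. s n \<in> S"
  obtain r z where rz: "strict_mono r" "z \<in> Bs p" "z \<notin> M" "(\<lambda>n. Ns p (s (r n) - z)) \<longlonglongrightarrow> 0"
    by (rule relcompact_avoidingD[OF S s])
  have dp: "s n - z \<in> Bs p" for n using s Sp rz(2) P.diff_mem by blast
  have "(\<lambda>n. Ns (Suc p) (s (r n) - z)) \<longlonglongrightarrow> 0"
  proof (rule tendsto_zero_squeeze)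
    show "0 \<le> Ns (Suc p) (s (r n) - z)" for n
      using dp subset_Suc Q.norm_nonneg by blast
    show "Ns (Suc p) (s (r n) - z) \<le> c * Ns p (s (r n) - z)" for n
      using c(2) dp by blast
    show "(\<lambda>n. c * Ns p (s (r n) - z)) \<longlonglongrightarrow> 0"
      using tendsto_mult_right_zero[OF rz(4)] .
  qed
  then show "\<exists>r z. strict_mono r \<and> z \<in> Bs (Suc p) \<and> z \<notin> M \<and> (\<lambda>n. Ns (Suc p) (s (r n) - z)) \<longlonglongrightarrow> 0"
    using rz(1-3) subset_Suc by blast
qed

lemma relcompact_avoiding_gap:
  assumes M: "stepwise_seq_closed M" and S: "relcompact_avoiding M q S"
  shows "\<exists>\<delta>>0. \<forall>a\<in>S. \<forall>b\<in>Bs q. Ns q b < \<delta> \<longrightarrow> a + b \<notin> M"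
proof (rule ccontr)
  interpret Q: banach_subspace "Bs q" "Ns q" by (rule banach_subspace_step)
  assume no_gap: "\<not> ?thesis"
  have "\<exists>a b. a \<in> S \<and> b \<in> Bs q \<and> Ns q b < inverse (real (Suc n)) \<and> a + b \<in> M" for n
  proof -
    have "inverse (real (Suc n)) > 0" by simp
    then show ?thesis using no_gap by blast
  qed
  then obtain a b where a: "\<And>n. a n \<in> S" and b: "\<And>n. b n \<in> Bs q"
    and b_small: "\<And>n. Ns q (b n) < inverse (real (Suc n))" and ab: "\<And>n. a n + b n \<in> M"
    by metis
  obtain r z where r: "strict_mono r" and z: "z \<in> Bs q" "z \<notin> M"
    and lim: "(\<lambda>n. Ns q (a (r n) - z)) \<longlonglongrightarrow> 0"
    by (rule relcompact_avoidingD[OF S a])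
  have aq: "a n \<in> Bs q" for n using a relcompact_avoiding_subset[OF S] by blast
  have "(\<lambda>n. Ns q (b (r n) - 0)) \<longlonglongrightarrow> 0"
  proof (rule tendsto_zero_squeeze)
    show "0 \<le> Ns q (b (r n) - 0)" for n using Q.norm_nonneg[OF b] by simp
    show "Ns q (b (r n) - 0) \<le> inverse (real (Suc n))" for n
    proof -
      have "inverse (real (Suc (r n))) \<le> inverse (real (Suc n))"
        using seq_suble[OF r, of n] by (simp add: le_imp_inverse_le)
      then show ?thesis using b_small[of "r n"] by (simp only: diff_zero)
    qed
    show "(\<lambda>n. inverse (real (Suc n))) \<longlonglongrightarrow> 0" by (rule LIMSEQ_inverse_real_of_nat)
  qed
  then have "(\<lambda>n. Ns q (a (r n) + b (r n) - (z + 0))) \<longlonglongrightarrow> 0"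
    using Q.limit_add[OF aq b z(1) Q.zero_mem lim] by blast
  then have "z \<in> M"
    by (intro stepwise_seq_closedD[OF M _ _ z(1), of "\<lambda>n. a (r n) + b (r n)"])
      (simp_all add: ab Q.add_mem[OF aq b])
  then show False using z(2) by simp
qed

lemma thickening_subset: "S \<subseteq> Bs p \<Longrightarrow> thickening p S e \<subseteq> Bs p"
  unfolding thickening_def step_ball_def
  using banach_subspace.add_mem[OF banach_subspace_step] by blast

text \<open>A sequence \<open>a n + b n\<close> in the thickening has a subsequence along which \<open>a n \<rightarrow> z \<notin> M\<close>
  and, by the compactness of \<open>Bs p \<subseteq> Bs (Suc p)\<close>, \<open>b n \<rightarrow> w\<close>; since \<open>Ns (Suc p) w \<le> \<delta>/2 < \<delta>\<close>, the
  gap keeps \<open>z + w\<close> outside \<open>M\<close>.\<close>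

lemma relcompact_avoiding_thickening_of_gap:
  assumes S': "relcompact_avoiding M (Suc p) S" and S: "S \<subseteq> Bs p" and "\<delta> > 0"
    and gap: "\<forall>a\<in>S. \<forall>b\<in>Bs (Suc p). Ns (Suc p) b < \<delta> \<longrightarrow> a + b \<notin> M"
    and small: "\<And>b. b \<in> step_ball p e \<Longrightarrow> Ns (Suc p) b \<le> \<delta> / 2"
  shows "relcompact_avoiding M (Suc p) (thickening p S e)"
proof (rule relcompact_avoidingI)
  interpret Q: banach_subspace "Bs (Suc p)" "Ns (Suc p)" by (rule banach_subspace_step)
  have SQ: "S \<subseteq> Bs (Suc p)" by (rule relcompact_avoiding_subset[OF S'])
  show "thickening p S e \<subseteq> Bs (Suc p)"
    using thickening_subset[OF S] subset_Suc by blast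
  fix s :: "nat \<Rightarrow> 'a" assume "\<And>n. s n \<in> thickening p S e"
  then have "\<forall>n. \<exists>a b. s n = a + b \<and> a \<in> S \<and> b \<in> step_ball p e"
    unfolding thickening_def by blast
  then obtain a b where s: "\<And>n. s n = a n + b n" and a: "\<And>n. a n \<in> S"
    and b: "\<And>n. b n \<in> step_ball p e"
    by metis
  have aQ: "a n \<in> Bs (Suc p)" for n using a SQ by blast
  have bQ: "b n \<in> Bs (Suc p)" for n using b subset_Suc unfolding step_ball_def by blast
  obtain r1 z where r1: "strict_mono r1" and z: "z \<in> Bs (Suc p)" "z \<notin> M"
    and lim_a: "(\<lambda>n. Ns (Suc p) (a (r1 n) - z)) \<longlonglongrightarrow> 0"
    by (rule relcompact_avoidingD[OF S' a])
  obtain r2 w where r2: "strict_mono r2" and w: "w \<in> Bs (Suc p)"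
    and lim_b: "(\<lambda>n. Ns (Suc p) (b (r1 (r2 n)) - w)) \<longlonglongrightarrow> 0"
    by (rule bounded_seq_converging_subseq[of "\<lambda>n. b (r1 n)" p e]) (use b in \<open>simp_all add: step_ball_def less_imp_le\<close>)
  have "Ns (Suc p) w \<le> \<delta> / 2"
    by (rule Q.norm_limit_le[of "\<lambda>n. b (r1 (r2 n))"]) (use bQ w lim_b small b in auto)
  then have "z + w \<notin> M"
    using Q.limit_plus_small_avoids[OF gap SQ _ z(1) lim_a w] a \<open>\<delta> > 0\<close> by simp
  moreover have "(\<lambda>n. Ns (Suc p) (s (r1 (r2 n)) - (z + w))) \<longlonglongrightarrow> 0"
    unfolding s
    by (rule Q.limit_add[OF aQ bQ z(1) w _ lim_b])
      (use LIMSEQ_subseq_LIMSEQ[OF lim_a r2] in \<open>simp add: comp_def\<close>)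
  ultimately show "\<exists>r z. strict_mono r \<and> z \<in> Bs (Suc p) \<and> z \<notin> M \<and>
      (\<lambda>n. Ns (Suc p) (s (r n) - z)) \<longlonglongrightarrow> 0"
    using strict_mono_o[OF r1 r2] Q.add_mem[OF z(1) w]
    by (intro exI[of _ "r1 \<circ> r2"] exI[of _ "z + w"]) simp
qed

lemma relcompact_avoiding_thickening:
  assumes M: "stepwise_seq_closed M" and S: "relcompact_avoiding M p S"
  shows "\<exists>e>0. relcompact_avoiding M (Suc p) (thickening p S e)"
proof -
  have S': "relcompact_avoiding M (Suc p) S" by (rule relcompact_avoiding_Suc[OF S])
  obtain \<delta> where \<delta>: "\<delta> > 0" and gap: "\<forall>a\<in>S. \<forall>b\<in>Bs (Suc p). Ns (Suc p) b < \<delta> \<longrightarrow> a + b \<notin> M"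
    using relcompact_avoiding_gap[OF M S'] by blast
  obtain c where c: "c > 0" "\<forall>x\<in>Bs p. Ns (Suc p) x \<le> c * Ns p x"
    using norm_Suc_le[of p] by blast
  define e where "e = \<delta> / (2 * c)"
  have "e > 0" unfolding e_def using \<delta> c by simp
  have small: "Ns (Suc p) b \<le> \<delta> / 2" if "b \<in> step_ball p e" for b
  proof -
    have "Ns (Suc p) b \<le> c * Ns p b" using c(2) that unfolding step_ball_def by blast
    also have "\<dots> \<le> c * e" using that c(1) unfolding step_ball_def by simp
    also have "c * e = \<delta> / 2" using c(1) by (simp add: e_def)
    finally show ?thesis .
  qed
  have "relcompact_avoiding M (Suc p) (thickening p S e)"
    by (rule relcompact_avoiding_thickening_of_gap[OF S' relcompact_avoiding_subset[OF S] \<delta> gap small])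
  with \<open>e > 0\<close> show ?thesis by blast
qed

lemma translate_thickening: "(+) y ` thickening p D e = thickening p ((+) y ` D) e"
proof (rule set_eqI, rule iffI)
  fix x assume "x \<in> (+) y ` thickening p D e"
  then obtain a b where "x = (y + a) + b" "a \<in> D" "b \<in> step_ball p e"
    unfolding thickening_def by (auto simp: add.assoc)
  then show "x \<in> thickening p ((+) y ` D) e"
    unfolding thickening_def by blast
next
  fix x assume "x \<in> thickening p ((+) y ` D) e"
  then obtain a b where "x = y + (a + b)" "a \<in> D" "b \<in> step_ball p e"
    unfolding thickening_def by (auto simp: add.assoc)
  then show "x \<in> (+) y ` thickening p D e"
    unfolding thickening_def by blast
qed

lemma relcompact_avoiding_chain:
  assumes M: "stepwise_seq_closed M" and y: "y \<in> Bs m" "y \<notin> M"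
  obtains D :: "nat \<Rightarrow> 'a set" and e :: "nat \<Rightarrow> real"
  where "D 0 = {0}" "\<And>n. D (Suc n) = thickening (m + n) (D n) (e n)" "\<And>n. e n > 0"
    "\<And>n. relcompact_avoiding M (m + n) ((+) y ` D n)"
proof -
  define eps where "eps p S = (SOME e. e > 0 \<and> relcompact_avoiding M (Suc p) (thickening p S e))"
    for p S
  have eps: "eps p S > 0 \<and> relcompact_avoiding M (Suc p) (thickening p S (eps p S))"
    if "relcompact_avoiding M p S" for p S
    unfolding eps_def by (rule someI_ex[OF relcompact_avoiding_thickening[OF M that]])
  define D where "D = rec_nat {0} (\<lambda>n D. thickening (m + n) D (eps (m + n) ((+) y ` D)))"
  have D0: "D 0 = {0}" unfolding D_def by simp
  have DS: "D (Suc n) = thickening (m + n) (D n) (eps (m + n) ((+) y ` D n))" for n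
    unfolding D_def by simp
  have avoiding: "relcompact_avoiding M (m + n) ((+) y ` D n)" for n
  proof (induction n)
    case 0
    then show ?case using relcompact_avoiding_singleton[OF y] D0 by simp
  next
    case (Suc n)
    then show ?case using conjunct2[OF eps[OF Suc.IH]] unfolding DS translate_thickening by simp
  qed
  show ?thesis
    using that[OF D0 DS conjunct1[OF eps[OF avoiding]] avoiding] .
qed

lemma step_ball_subset: "j \<le> k \<Longrightarrow> \<exists>c>0. \<forall>e. step_ball j (e / c) \<subseteq> step_ball k e"
proof -
  assume "j \<le> k"
  then obtain c where c: "c > 0" "\<forall>x\<in>Bs j. Ns k x \<le> c * Ns j x"
    using norm_le_mono by blast
  have "x \<in> step_ball k e" if "x \<in> step_ball j (e / c)" for x e
  proof -
    have "Ns k x \<le> c * Ns j x" using c(2) that unfolding step_ball_def by blast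
    also have "\<dots> < c * (e / c)"
      using mult_strict_left_mono[of "Ns j x" "e / c" c] c(1) that unfolding step_ball_def by simp
    finally show ?thesis
      using that subset_mono[OF \<open>j \<le> k\<close>] c(1) unfolding step_ball_def by auto
  qed
  then show ?thesis using c(1) by blast
qed

lemma lc_zero_nbhd_thickening_chain:
  assumes D0: "D 0 = {0}" and DS: "\<And>n. D (Suc n) = thickening (m + n) (D n) (e n)"
    and e: "\<And>n. e n > 0" and D_subset: "\<And>n. D n \<subseteq> Bs (m + n)"
  shows "lc_zero_nbhd Bs Ns (\<Union>n. D n)"
proof -
  have zero_step_ball: "0 \<in> step_ball p (e n)" for p n
    using e[of n] banach_subspace.zero_mem[OF banach_subspace_step]
      banach_subspace.norm_zero[OF banach_subspace_step] unfolding step_ball_def by simp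
  have zero: "0 \<in> D n" for n
  proof (induction n)
    case (Suc n)
    then have "0 + 0 \<in> D (Suc n)"
      unfolding DS thickening_def using zero_step_ball by blast
    then show ?case by simp
  qed (simp add: D0)
  have "D n \<subseteq> D (Suc n)" for n
  proof
    fix d assume "d \<in> D n"
    then have "d + 0 \<in> D (Suc n)"
      unfolding DS thickening_def using zero_step_ball by blast
    then show "d \<in> D (Suc n)" by simp
  qed
  then have "incseq D" by (rule incseq_SucI)
  have ball: "step_ball (m + n) (e n) \<subseteq> D (Suc n)" for n
  proof
    fix b assume "b \<in> step_ball (m + n) (e n)"
    then have "0 + b \<in> D (Suc n)"
      unfolding DS thickening_def using zero by blast
    then show "b \<in> D (Suc n)" by simp
  qed
  have "absolutely_convex (D n)" for n
  proof (induction n)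
    case (Suc n)
    then show ?case unfolding DS thickening_def step_ball_def
      by (rule absolutely_convex_sums[OF _ banach_subspace.absolutely_convex_ball[OF banach_subspace_step]])
  qed (simp add: D0 absolutely_convex_def)
  have "\<exists>r>0. {x\<in>Bs j. Ns j x < r} \<subseteq> (\<Union>n. D n)" for j
  proof -
    define n where "n = max j m - m"
    obtain c where c: "c > 0" "\<forall>e. step_ball j (e / c) \<subseteq> step_ball (m + n) e"
      using step_ball_subset[of j "m + n"] unfolding n_def by auto
    then have "step_ball j (e n / c) \<subseteq> (\<Union>n. D n)" using ball by blast
    then show ?thesis
      using c(1) e[of n] unfolding step_ball_def by (intro exI[of _ "e n / c"]) simp
  qed
  then show ?thesis
    unfolding lc_zero_nbhd_def
    using absolutely_convex_Union_chain[OF \<open>\<And>n. absolutely_convex (D n)\<close> \<open>incseq D\<close>] D_subset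
    by blast
qed

lemma lc_zero_nbhd_avoiding:
  assumes M: "stepwise_seq_closed M" and y: "y \<in> Bs m" "y \<notin> M"
  obtains V where "lc_zero_nbhd Bs Ns V" "\<And>v. v \<in> V \<Longrightarrow> y + v \<notin> M"
proof -
  obtain D and e :: "nat \<Rightarrow> real" where D0: "D 0 = {0}" and DS: "\<And>n. D (Suc n) = thickening (m + n) (D n) (e n)"
    and e: "\<And>n. e n > 0" and avoiding: "\<And>n. relcompact_avoiding M (m + n) ((+) y ` D n)"
    using relcompact_avoiding_chain[OF M y] by blast
  have D_subset: "D n \<subseteq> Bs (m + n)" for n
  proof
    fix v assume "v \<in> D n"
    then have "y + v \<in> Bs (m + n)"
      using relcompact_avoiding_subset[OF avoiding] by blast
    moreover have "y \<in> Bs (m + n)" using y(1) subset_mono[of m "m + n"] by auto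
    ultimately have "(y + v) - y \<in> Bs (m + n)"
      using banach_subspace.diff_mem[OF banach_subspace_step] by blast
    then show "v \<in> Bs (m + n)" by simp
  qed
  have "lc_zero_nbhd Bs Ns (\<Union>n. D n)"
    by (rule lc_zero_nbhd_thickening_chain[OF D0 DS e D_subset])
  moreover have "y + v \<notin> M" if "v \<in> (\<Union>n. D n)" for v
    using that relcompact_avoiding_disjoint[OF avoiding] by blast
  ultimately show ?thesis using that by blast
qed

lemma closedin_if_stepwise_seq_closed:
  assumes M: "stepwise_seq_closed M" and "M \<subseteq> (\<Union>j. Bs j)"
  shows "closedin (lc_inductive_limit Bs Ns) M"
  unfolding closedin_def topspace_lc_inductive_limit
proof (intro conjI)
  show "M \<subseteq> (\<Union>j. Bs j)" by fact
  show "openin (lc_inductive_limit Bs Ns) ((\<Union>j. Bs j) - M)"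
    unfolding openin_lc_inductive_limit
  proof (intro conjI ballI)
    fix x assume x: "x \<in> (\<Union>j. Bs j) - M"
    then obtain m where xm: "x \<in> Bs m" by blast
    obtain V where V: "lc_zero_nbhd Bs Ns V" and avoid: "\<And>v. v \<in> V \<Longrightarrow> x + v \<notin> M"
      using lc_zero_nbhd_avoiding[OF M xm] x by blast
    have "(\<lambda>v. x + v) ` V \<subseteq> (\<Union>j. Bs j) - M"
      using subspace_add[OF subspace_Union] x V avoid unfolding lc_zero_nbhd_def by blast
    with V show "\<exists>V. lc_zero_nbhd Bs Ns V \<and> (\<lambda>v. x + v) ` V \<subseteq> (\<Union>j. Bs j) - M" by blast
  qed blast
qed

end

section \<open>Closed range for operators with closed graph and property (H)\<close>

text \<open>In the application \<open>X\<close> is the first step \<open>E\<^sup>\<sharp>\<^sub>0\<close> of \<open>E\<^sup>\<sharp>\<close>, \<open>Y\<close> is a step \<open>F\<^sub>p\<close> of \<open>F\<close>, and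
  \<open>Es\<close> are the steps of \<open>E\<close>.\<close>

locale closed_range_setting =
  fixes X :: "'a::real_vector set" and NX :: "'a \<Rightarrow> real"
    and Y :: "'b::real_vector set" and NY :: "'b \<Rightarrow> real"
    and T :: "'a \<Rightarrow> 'b"
    and Es :: "nat \<Rightarrow> 'a set" and NE :: "nat \<Rightarrow> 'a \<Rightarrow> real"
  assumes banach_X: "banach_subspace X NX" and banach_Y: "banach_subspace Y NY"
    and dfs_E: "dfs_sequence Es NE"
    and T_add: "\<And>x y. x \<in> X \<Longrightarrow> y \<in> X \<Longrightarrow> T (x + y) = T x + T y"
    and T_scaleR: "\<And>c x. x \<in> X \<Longrightarrow> T (c *\<^sub>R x) = c *\<^sub>R T x"
    and closed_graph: "\<And>s u v. (\<And>n::nat. s n \<in> X) \<Longrightarrow> (\<And>n. T (s n) \<in> Y) \<Longrightarrow> u \<in> X \<Longrightarrow> v \<in> Y \<Longrightarrow>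
        (\<lambda>n. NX (s n - u)) \<longlonglongrightarrow> 0 \<Longrightarrow> (\<lambda>n. NY (T (s n) - v)) \<longlonglongrightarrow> 0 \<Longrightarrow> T u = v"
    and continuous_E_X: "\<And>j. continuous_map (norm_topology (Es j) (NE j)) (norm_topology X NX) id"
    and property_H: "\<And>u. u \<in> X \<Longrightarrow> T u \<in> Y \<Longrightarrow> u \<in> (\<Union>j. Es j)"
begin

sublocale X: banach_subspace X NX by (rule banach_X)
sublocale Y: banach_subspace Y NY by (rule banach_Y)
sublocale E: dfs_sequence Es NE by (rule dfs_E)

lemma T_zero: "T 0 = 0"
  using T_scaleR[of 0 0] by simp

lemma T_diff: "x \<in> X \<Longrightarrow> y \<in> X \<Longrightarrow> T (x - y) = T x - T y"
  using T_add[of x "(-1) *\<^sub>R y"] T_scaleR[of y "-1"] X.uminus_mem by simp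

lemma E_subset_X: "Es j \<subseteq> X"
  using continuous_map_image_subset_topspace[OF continuous_E_X[of j]] by simp

lemma E_limit_imp_X_limit:
  assumes s: "\<And>n::nat. s n \<in> Es j" and l: "l \<in> Es j" and lim: "(\<lambda>n. NE j (s n - l)) \<longlonglongrightarrow> 0"
  shows "(\<lambda>n. NX (s n - l)) \<longlonglongrightarrow> 0"
proof -
  have "limitin (norm_topology (Es j) (NE j)) s l sequentially"
    using banach_subspace.limitin_norm_topology_iff[OF E.banach_subspace_step s] l lim by simp
  then have "limitin (norm_topology X NX) (id \<circ> s) (id l) sequentially"
    by (rule continuous_map_limit[OF continuous_E_X])
  moreover have "s n \<in> X" for n using s E_subset_X by blast
  ultimately show ?thesis
    using X.limitin_norm_topology_iff by simp
qed

definition G :: "'a set" where "G = {u\<in>X. T u \<in> Y}"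
definition NG :: "'a \<Rightarrow> real" where "NG u = NX u + NY (T u)"

lemma G_X: "u \<in> G \<Longrightarrow> u \<in> X" unfolding G_def by simp
lemma G_Y: "u \<in> G \<Longrightarrow> T u \<in> Y" unfolding G_def by simp
lemma GI: "u \<in> X \<Longrightarrow> T u \<in> Y \<Longrightarrow> u \<in> G" unfolding G_def by simp

lemma G_zero: "0 \<in> G" by (rule GI) (simp_all add: T_zero)
lemma G_add: "u \<in> G \<Longrightarrow> v \<in> G \<Longrightarrow> u + v \<in> G"
  by (rule GI) (simp_all add: X.add_mem G_X T_add Y.add_mem G_Y)
lemma G_scaleR: "u \<in> G \<Longrightarrow> c *\<^sub>R u \<in> G"
  by (rule GI) (simp_all add: X.scaleR_mem G_X T_scaleR Y.scaleR_mem G_Y)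
lemma G_diff: "u \<in> G \<Longrightarrow> v \<in> G \<Longrightarrow> u - v \<in> G"
  by (rule GI) (simp_all add: X.diff_mem G_X T_diff Y.diff_mem G_Y)

lemma NX_le_NG: "u \<in> G \<Longrightarrow> NX u \<le> NG u"
  unfolding NG_def using Y.norm_nonneg G_Y by simp
lemma NY_le_NG: "u \<in> G \<Longrightarrow> NY (T u) \<le> NG u"
  unfolding NG_def using X.norm_nonneg G_X by simp

lemma NG_Cauchy_convergent:
  fixes u :: "nat \<Rightarrow> 'a"
  assumes u: "\<And>n. u n \<in> G" and Cauchy: "\<And>e. e > 0 \<Longrightarrow> \<exists>M. \<forall>m\<ge>M. \<forall>n\<ge>M. NG (u m - u n) < e"
  shows "\<exists>l\<in>G. (\<lambda>n. NG (u n - l)) \<longlonglongrightarrow> 0"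
proof -
  have uX: "u n \<in> X" and uY: "T (u n) \<in> Y" for n using u G_X G_Y by blast+
  have "\<exists>M. \<forall>m\<ge>M. \<forall>n\<ge>M. NX (u m - u n) < e" if e: "e > 0" for e
  proof -
    obtain M where M: "\<forall>m\<ge>M. \<forall>n\<ge>M. NG (u m - u n) < e" using Cauchy[OF e] by blast
    have "NX (u m - u n) < e" if "m \<ge> M" "n \<ge> M" for m n
      using NX_le_NG[OF G_diff[OF u u], of m n] M that by fastforce
    then show ?thesis by blast
  qed
  from X.Cauchy_convergent[OF uX this]
  obtain l where l: "l \<in> X" "(\<lambda>n. NX (u n - l)) \<longlonglongrightarrow> 0" by blast
  have "\<exists>M. \<forall>m\<ge>M. \<forall>n\<ge>M. NY (T (u m) - T (u n)) < e" if e: "e > 0" for e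
  proof -
    obtain M where M: "\<forall>m\<ge>M. \<forall>n\<ge>M. NG (u m - u n) < e" using Cauchy[OF e] by blast
    have "NY (T (u m) - T (u n)) < e" if "m \<ge> M" "n \<ge> M" for m n
      using NY_le_NG[OF G_diff[OF u u], of m n] T_diff[OF uX uX, of m n] M that by fastforce
    then show ?thesis by blast
  qed
  from Y.Cauchy_convergent[OF uY this]
  obtain v where v: "v \<in> Y" "(\<lambda>n. NY (T (u n) - v)) \<longlonglongrightarrow> 0" by blast
  have "T l = v" by (rule closed_graph[OF uX uY l(1) v(1) l(2) v(2)])
  then have lG: "l \<in> G" and NG_eq: "(\<lambda>n. NG (u n - l)) = (\<lambda>n. NX (u n - l) + NY (T (u n) - v))"
    using l(1) v(1) GI T_diff[OF uX l(1)] unfolding NG_def by simp_all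
  have "(\<lambda>n. NG (u n - l)) \<longlonglongrightarrow> 0"
    unfolding NG_eq by (rule tendsto_add_zero[OF l(2) v(2)])
  with lG show ?thesis by blast
qed

lemma banach_G: "banach_on G NG"
  unfolding banach_on_def
proof (intro conjI ballI allI impI)
  show "subspace G" unfolding subspace_def using G_zero G_add G_scaleR by blast
  show "0 \<le> NG x" if "x \<in> G" for x
    unfolding NG_def using X.norm_nonneg Y.norm_nonneg G_X G_Y that by (simp add: add_nonneg_nonneg)
  show "x = 0" if "x \<in> G" "NG x = 0" for x
  proof -
    have "NX x = 0"
      using that X.norm_nonneg[OF G_X] Y.norm_nonneg[OF G_Y] unfolding NG_def by (smt (verit))
    then show ?thesis using X.norm_eq_zeroD G_X that(1) by blast
  qed
  show "NG (x + y) \<le> NG x + NG y" if x: "x \<in> G" and y: "y \<in> G" for x y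
    using X.norm_triangle[OF G_X[OF x] G_X[OF y]] Y.norm_triangle[OF G_Y[OF x] G_Y[OF y]]
      T_add[OF G_X[OF x] G_X[OF y]]
    unfolding NG_def by simp
  show "NG (c *\<^sub>R x) = \<bar>c\<bar> * NG x" if "x \<in> G" for c x
    using X.norm_scaleR[OF G_X] Y.norm_scaleR[OF G_Y] T_scaleR[OF G_X] that
    unfolding NG_def by (simp add: distrib_left)
  show "\<exists>l\<in>G. (\<lambda>n. NG (u n - l)) \<longlonglongrightarrow> 0"
    if "(\<forall>n. u n \<in> G) \<and> (\<forall>e>0. \<exists>M. \<forall>m\<ge>M. \<forall>n\<ge>M. NG (u m - u n) < e)" for u
    by (rule NG_Cauchy_convergent) (simp_all add: that)
qed

sublocale G: banach_subspace G NG by unfold_locales (rule banach_G)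

definition scaled_ball_closure :: "nat \<Rightarrow> nat \<Rightarrow> 'a set" where
  "scaled_ball_closure j m = {u\<in>G. \<exists>z\<in>E.unit_ball_closure j. u = real m *\<^sub>R z}"

lemma scaled_ball_closure_subset: "scaled_ball_closure j m \<subseteq> G"
  unfolding scaled_ball_closure_def by blast

lemma closedin_scaled_ball_closure:
  "closedin (Metric_space.mtopology G G.ndist) (scaled_ball_closure j m)"
  unfolding Metric_space.metric_closedin_iff_sequentially_closed[OF G.Metric_space_ndist]
proof (intro conjI allI impI)
  interpret S: banach_subspace "Es (Suc j)" "NE (Suc j)" by (rule E.banach_subspace_step)
  show "scaled_ball_closure j m \<subseteq> G" by (rule scaled_ball_closure_subset)
  fix \<sigma> :: "nat \<Rightarrow> 'a" and l
  assume "range \<sigma> \<subseteq> scaled_ball_closure j m \<and> limitin (Metric_space.mtopology G G.ndist) \<sigma> l sequentially"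
  then have \<sigma>A: "\<And>n. \<sigma> n \<in> scaled_ball_closure j m"
    and lim: "limitin (norm_topology G NG) \<sigma> l sequentially"
    unfolding G.norm_topology_eq_mtopology by auto
  have \<sigma>G: "\<sigma> n \<in> G" for n using \<sigma>A scaled_ball_closure_subset by blast
  have lG: "l \<in> G" and lim_G: "(\<lambda>n. NG (\<sigma> n - l)) \<longlonglongrightarrow> 0"
    using lim G.limitin_norm_topology_iff[OF \<sigma>G] by simp_all
  have "\<forall>n. \<exists>z. z \<in> E.unit_ball_closure j \<and> \<sigma> n = real m *\<^sub>R z"
    using \<sigma>A unfolding scaled_ball_closure_def by blast
  then obtain z where zK: "\<And>n. z n \<in> E.unit_ball_closure j" and \<sigma>z: "\<And>n. \<sigma> n = real m *\<^sub>R z n"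
    by metis
  obtain r l' where r: "strict_mono r" and l'K: "l' \<in> E.unit_ball_closure j"
    and lim_z: "(\<lambda>n. NE (Suc j) (z (r n) - l')) \<longlonglongrightarrow> 0"
    by (rule E.unit_ball_closure_seq_compact[OF zK])
  have zS: "z n \<in> Es (Suc j)" for n using zK E.unit_ball_closure_subset by blast
  have l'S: "l' \<in> Es (Suc j)" using l'K E.unit_ball_closure_subset by blast
  have lim_E: "(\<lambda>n. NE (Suc j) (\<sigma> (r n) - real m *\<^sub>R l')) \<longlonglongrightarrow> 0"
  proof -
    have "NE (Suc j) (\<sigma> (r n) - real m *\<^sub>R l') = real m * NE (Suc j) (z (r n) - l')" for n
      unfolding \<sigma>z scaleR_diff_right[symmetric] using S.norm_scaleR[OF S.diff_mem[OF zS l'S]] by simp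
    then show ?thesis using tendsto_mult_right_zero[OF lim_z] by simp
  qed
  have lim_X': "(\<lambda>n. NX (\<sigma> (r n) - real m *\<^sub>R l')) \<longlonglongrightarrow> 0"
    by (rule E_limit_imp_X_limit[where j="Suc j", OF _ _ lim_E]) (use zS l'S S.scaleR_mem \<sigma>z in auto)
  have "(\<lambda>n. NX (\<sigma> n - l)) \<longlonglongrightarrow> 0"
    by (rule tendsto_zero_squeeze[OF _ _ lim_G])
      (use X.norm_nonneg[OF G_X[OF G_diff[OF \<sigma>G lG]]] NX_le_NG[OF G_diff[OF \<sigma>G lG]] in auto)
  then have lim_X: "(\<lambda>n. NX (\<sigma> (r n) - l)) \<longlonglongrightarrow> 0"
    using LIMSEQ_subseq_LIMSEQ[OF _ r] unfolding comp_def by blast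
  have "l = real m *\<^sub>R l'"
    by (rule X.limit_unique[OF _ G_X[OF lG] _ lim_X lim_X'])
      (use G_X[OF \<sigma>G] S.scaleR_mem[OF l'S] E_subset_X in auto)
  then show "l \<in> scaled_ball_closure j m"
    unfolding scaled_ball_closure_def using lG l'K by blast
qed

lemma Union_scaled_ball_closure: "(\<Union>(j, m). scaled_ball_closure j m) = G"
proof
  show "(\<Union>(j, m). scaled_ball_closure j m) \<subseteq> G"
    using scaled_ball_closure_subset by blast
  show "G \<subseteq> (\<Union>(j, m). scaled_ball_closure j m)"
  proof
    fix u assume uG: "u \<in> G"
    obtain j where uj: "u \<in> Es j" using property_H[OF G_X[OF uG] G_Y[OF uG]] by blast
    interpret J: banach_subspace "Es j" "NE j" by (rule E.banach_subspace_step)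
    define m where "m = nat \<lceil>NE j u\<rceil> + 1"
    have m: "real m > 0" "NE j u \<le> real m" unfolding m_def by linarith+
    define z where "z = (1 / real m) *\<^sub>R u"
    have "NE j z = NE j u / real m" unfolding z_def using J.norm_scaleR[OF uj] m by simp
    also have "\<dots> \<le> 1" using m by simp
    finally have "z \<in> E.unit_ball_closure j"
      using E.unit_ball_subset_closure[of j] J.scaleR_mem[OF uj] unfolding z_def by blast
    moreover have "u = real m *\<^sub>R z" unfolding z_def using m by simp
    ultimately have "u \<in> scaled_ball_closure j m"
      unfolding scaled_ball_closure_def using uG by blast
    then show "u \<in> (\<Union>(j, m). scaled_ball_closure j m)" by blast
  qed
qed

lemma scaled_ball_closure_has_interior:
  obtains \<rho> u0 j m where "\<rho> > 0" "u0 \<in> G"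
    "\<And>v. v \<in> G \<Longrightarrow> NG (u0 - v) < \<rho> \<Longrightarrow> v \<in> scaled_ball_closure j m"
proof -
  let ?M = "Metric_space.mtopology G G.ndist"
  have "\<exists>j m. ?M interior_of scaled_ball_closure j m \<noteq> {}"
  proof (rule ccontr)
    assume "\<not> ?thesis"
    then have "?M interior_of \<Union>(range (\<lambda>(j, m). scaled_ball_closure j m)) = {}"
      by (intro Metric_space.metric_Baire_category_alt[OF G.Metric_space_ndist G.mcomplete_ndist])
        (auto intro: closedin_scaled_ball_closure)
    moreover have "?M interior_of G = G"
      using interior_of_topspace[of ?M] unfolding Metric_space.topspace_mtopology[OF G.Metric_space_ndist] .
    ultimately show False
      using Union_scaled_ball_closure G_zero by simp
  qed
  then obtain j m u0 where u0: "u0 \<in> ?M interior_of scaled_ball_closure j m" by blast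
  have "openin ?M (?M interior_of scaled_ball_closure j m)" by simp
  then obtain \<rho> where \<rho>: "\<rho> > 0"
    and ball: "Metric_space.mball G G.ndist u0 \<rho> \<subseteq> scaled_ball_closure j m"
    using u0 interior_of_subset[of ?M "scaled_ball_closure j m"]
    unfolding Metric_space.openin_mtopology[OF G.Metric_space_ndist] by blast
  have u0G: "u0 \<in> G"
    using u0 interior_of_subset[of ?M] scaled_ball_closure_subset by blast
  show ?thesis
  proof (rule that[OF \<rho> u0G])
    fix v assume "v \<in> G" "NG (u0 - v) < \<rho>"
    then
    have "v \<in> Metric_space.mball G G.ndist u0 \<rho>"
      unfolding Metric_space.in_mball[OF G.Metric_space_ndist] G.ndist_def using u0G by simp
    then show "v \<in> scaled_ball_closure j m" using ball by blast
  qed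
qed

lemma graph_domain_estimate: "\<exists>j C. 0 \<le> C \<and> (\<forall>u\<in>G. u \<in> Es j \<and> NE j u \<le> C * NG u)"
proof -
  obtain \<rho> u0 j m where \<rho>: "\<rho> > 0" and u0G: "u0 \<in> G"
    and ball: "\<And>v. v \<in> G \<Longrightarrow> NG (u0 - v) < \<rho> \<Longrightarrow> v \<in> scaled_ball_closure j m"
    using scaled_ball_closure_has_interior by blast
  interpret S: banach_subspace "Es (Suc j)" "NE (Suc j)" by (rule E.banach_subspace_step)
  obtain \<beta> where \<beta>: "\<beta> > 0" "\<forall>x\<in>E.unit_ball_closure j. NE (Suc j) x \<le> \<beta>"
    using E.unit_ball_closure_bounded by blast
  have "h \<in> Es (Suc j) \<and> NE (Suc j) h \<le> 2 * real m * \<beta>" if h: "h \<in> G" "NG h < \<rho>" for h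
  proof -
    have "u0 + h \<in> scaled_ball_closure j m"
      using ball[OF G_add[OF u0G h(1)]] G.norm_minus[OF h(1)] h(2) by simp
    then obtain z1 where z1: "z1 \<in> E.unit_ball_closure j" "u0 + h = real m *\<^sub>R z1"
      unfolding scaled_ball_closure_def by blast
    obtain z2 where z2: "z2 \<in> E.unit_ball_closure j" "u0 = real m *\<^sub>R z2"
      using ball[OF u0G] \<rho> unfolding scaled_ball_closure_def by auto
    have z12: "z1 \<in> Es (Suc j)" "z2 \<in> Es (Suc j)"
      using z1(1) z2(1) E.unit_ball_closure_subset by blast+
    have h_eq: "h = real m *\<^sub>R (z1 - z2)"
      using z1(2) z2(2) by (simp add: scaleR_diff_right algebra_simps)
    have "NE (Suc j) h = real m * NE (Suc j) (z1 - z2)"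
      unfolding h_eq using S.norm_scaleR[OF S.diff_mem[OF z12]] by simp
    also have "\<dots> \<le> real m * (NE (Suc j) z1 + NE (Suc j) z2)"
      by (rule mult_left_mono[OF S.norm_diff_le_add[OF z12]]) simp
    also have "\<dots> \<le> real m * (\<beta> + \<beta>)"
      using \<beta>(2) z1(1) z2(1) by (intro mult_left_mono add_mono) auto
    finally show ?thesis
      unfolding h_eq using S.scaleR_mem[OF S.diff_mem[OF z12]] by simp
  qed
  then have "\<forall>u\<in>G. u \<in> Es (Suc j) \<and> NE (Suc j) u \<le> (2 * (2 * real m * \<beta>) / \<rho>) * NG u"
    using G.norm_bound_from_ball[OF E.banach_subspace_step \<rho>] by blast
  moreover have "0 \<le> 2 * (2 * real m * \<beta>) / \<rho>" using \<beta>(1) \<rho> by simp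
  ultimately show ?thesis by blast
qed

lemma bounded_graph_seq_limit:
  fixes w :: "nat \<Rightarrow> 'a"
  assumes w: "\<And>n. w n \<in> G" and bounded: "\<And>n. NG (w n) \<le> R"
    and y: "y \<in> Y" and lim_y: "(\<lambda>n. NY (T (w n) - y)) \<longlonglongrightarrow> 0"
  obtains r w0 where "strict_mono r" "w0 \<in> G" "T w0 = y" "(\<lambda>n. NG (w (r n) - w0)) \<longlonglongrightarrow> 0"
proof -
  obtain j C where C: "0 \<le> C" "\<forall>u\<in>G. u \<in> Es j \<and> NE j u \<le> C * NG u"
    using graph_domain_estimate by blast
  have wE: "w n \<in> Es j" for n
    using C(2) w by blast
  have "NE j (w n) \<le> C * R" for n
  proof -
    have "NE j (w n) \<le> C * NG (w n)" using C(2) w by blast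
    also have "\<dots> \<le> C * R" by (rule mult_left_mono[OF bounded C(1)])
    finally show ?thesis .
  qed
  with wE obtain r l where r: "strict_mono r" and l: "l \<in> Es (Suc j)"
    and lim_E: "(\<lambda>n. NE (Suc j) (w (r n) - l)) \<longlonglongrightarrow> 0"
    by (rule E.bounded_seq_converging_subseq)
  have lim_X: "(\<lambda>n. NX (w (r n) - l)) \<longlonglongrightarrow> 0"
    by (rule E_limit_imp_X_limit[OF _ l lim_E]) (use wE E.subset_Suc in blast)
  have lim_Y: "(\<lambda>n. NY (T (w (r n)) - y)) \<longlonglongrightarrow> 0"
    using LIMSEQ_subseq_LIMSEQ[OF lim_y r] unfolding comp_def .
  have lX: "l \<in> X" using l E_subset_X by blast
  have Tl: "T l = y"
    by (rule closed_graph[OF _ _ lX y lim_X lim_Y]) (use w G_X G_Y in blast)+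
  then have lG: "l \<in> G" using lX y by (simp add: GI)
  have "(\<lambda>n. NG (w (r n) - l)) = (\<lambda>n. NX (w (r n) - l) + NY (T (w (r n)) - y))"
    unfolding NG_def using T_diff[OF G_X[OF w] lX] Tl by simp
  then have "(\<lambda>n. NG (w (r n) - l)) \<longlonglongrightarrow> 0"
    using tendsto_add_zero[OF lim_X lim_Y] by simp
  with r lG Tl show ?thesis using that by blast
qed

definition kernel :: "'a set" where "kernel = {k\<in>G. T k = 0}"

definition dist_kernel :: "'a \<Rightarrow> real" where
  "dist_kernel u = Inf ((\<lambda>k. NG (u - k)) ` kernel)"

lemma zero_kernel: "0 \<in> kernel" unfolding kernel_def using G_zero T_zero by simp
lemma kernel_G: "k \<in> kernel \<Longrightarrow> k \<in> G" unfolding kernel_def by simp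
lemma kernel_T: "k \<in> kernel \<Longrightarrow> T k = 0" unfolding kernel_def by simp
lemma kernel_add: "k \<in> kernel \<Longrightarrow> k' \<in> kernel \<Longrightarrow> k + k' \<in> kernel"
  unfolding kernel_def using G_add T_add G_X by auto
lemma kernel_scaleR: "k \<in> kernel \<Longrightarrow> c *\<^sub>R k \<in> kernel"
  unfolding kernel_def using G_scaleR T_scaleR G_X by auto

lemma bdd_below_dist_kernel: "u \<in> G \<Longrightarrow> bdd_below ((\<lambda>k. NG (u - k)) ` kernel)"
  unfolding bdd_below_def using G.norm_nonneg G_diff kernel_G by blast

lemma dist_kernel_le: "u \<in> G \<Longrightarrow> k \<in> kernel \<Longrightarrow> dist_kernel u \<le> NG (u - k)"
  unfolding dist_kernel_def by (rule cInf_lower) (auto intro: bdd_below_dist_kernel)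

lemma dist_kernel_approx:
  assumes "u \<in> G" "e > 0"
  shows "\<exists>k\<in>kernel. NG (u - k) < dist_kernel u + e"
proof -
  have "Inf ((\<lambda>k. NG (u - k)) ` kernel) < dist_kernel u + e"
    unfolding dist_kernel_def using assms(2) by simp
  then show ?thesis
    using cInf_less_iff[of "(\<lambda>k. NG (u - k)) ` kernel"] zero_kernel bdd_below_dist_kernel[OF assms(1)]
    by auto
qed

lemma normalized_dist_kernel_ge_one:
  assumes u: "u \<in> G" and k: "k \<in> kernel" and k': "k' \<in> kernel" and d: "dist_kernel u > 0"
  shows "1 \<le> NG ((1 / dist_kernel u) *\<^sub>R (u - k) - k')"
proof -
  have kk': "k + dist_kernel u *\<^sub>R k' \<in> kernel" by (rule kernel_add[OF k kernel_scaleR[OF k']])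
  have "(1 / dist_kernel u) *\<^sub>R (u - k) - k' = (1 / dist_kernel u) *\<^sub>R (u - (k + dist_kernel u *\<^sub>R k'))"
    using d by (simp add: algebra_simps)
  then have "NG ((1 / dist_kernel u) *\<^sub>R (u - k) - k') = NG (u - (k + dist_kernel u *\<^sub>R k')) / dist_kernel u"
    using G.norm_scaleR[OF G_diff[OF u kernel_G[OF kk']]] d by simp
  moreover have "dist_kernel u \<le> NG (u - (k + dist_kernel u *\<^sub>R k'))"
    by (rule dist_kernel_le[OF u kk'])
  ultimately show ?thesis using d by (simp add: le_divide_eq)
qed

lemma normalized_dist_kernel:
  assumes u: "u \<in> G" and d: "dist_kernel u > 0"
  obtains w where "w \<in> G" "NG w \<le> 2" "T w = (1 / dist_kernel u) *\<^sub>R T u"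
    "\<And>k'. k' \<in> kernel \<Longrightarrow> 1 \<le> NG (w - k')"
proof -
  obtain k where k: "k \<in> kernel" and k_lt: "NG (u - k) < dist_kernel u + dist_kernel u"
    using dist_kernel_approx[OF u d] by blast
  define w where "w = (1 / dist_kernel u) *\<^sub>R (u - k)"
  have ukG: "u - k \<in> G" by (rule G_diff[OF u kernel_G[OF k]])
  have "NG w = NG (u - k) / dist_kernel u"
    unfolding w_def using G.norm_scaleR[OF ukG] d by simp
  also have "\<dots> \<le> 2" using k_lt d by (simp add: divide_le_eq)
  finally have "NG w \<le> 2" .
  moreover have "T w = (1 / dist_kernel u) *\<^sub>R T u"
    unfolding w_def using T_scaleR[OF G_X[OF ukG]] T_diff[OF G_X[OF u] G_X[OF kernel_G[OF k]]]
      kernel_T[OF k] by simp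
  moreover have "w \<in> G" unfolding w_def by (rule G_scaleR[OF ukG])
  ultimately show ?thesis
    using that normalized_dist_kernel_ge_one[OF u k _ d] unfolding w_def by blast
qed

lemma dist_kernel_bound: "\<exists>C. \<forall>u\<in>G. dist_kernel u \<le> C * NY (T u)"
proof (rule ccontr)
  assume "\<not> ?thesis"
  then have "\<exists>u. u \<in> G \<and> real (Suc n) * NY (T u) < dist_kernel u" for n
    by (meson not_le)
  then obtain u where uG: "\<And>n. u n \<in> G" and u_lt: "\<And>n. real (Suc n) * NY (T (u n)) < dist_kernel (u n)"
    by metis
  have d: "dist_kernel (u n) > 0" for n
    using u_lt[of n] Y.norm_nonneg[OF G_Y[OF uG], of n] by (smt (verit) of_nat_0_le_iff mult_nonneg_nonneg)
  have "\<exists>w. w \<in> G \<and> NG w \<le> 2 \<and> T w = (1 / dist_kernel (u n)) *\<^sub>R T (u n) \<and>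
      (\<forall>k'\<in>kernel. 1 \<le> NG (w - k'))" for n
    by (rule normalized_dist_kernel[OF uG d]) blast
  then obtain w where wG: "\<And>n. w n \<in> G" and w_bounded: "\<And>n. NG (w n) \<le> 2"
    and Tw: "\<And>n. T (w n) = (1 / dist_kernel (u n)) *\<^sub>R T (u n)"
    and far: "\<And>n k'. k' \<in> kernel \<Longrightarrow> 1 \<le> NG (w n - k')"
    by metis
  have "(\<lambda>n. NY (T (w n) - 0)) \<longlonglongrightarrow> 0"
  proof (rule tendsto_zero_squeeze)
    show "0 \<le> NY (T (w n) - 0)" for n using Y.norm_nonneg[OF G_Y[OF wG]] by simp
    show "NY (T (w n) - 0) \<le> inverse (real (Suc n))" for n
    proof -
      have "NY (T (w n) - 0) = NY (T (u n)) / dist_kernel (u n)"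
        unfolding Tw using Y.norm_scaleR[OF G_Y[OF uG]] d[of n] by simp
      also have "\<dots> \<le> inverse (real (Suc n))"
        using u_lt[of n] d[of n] by (simp add: divide_le_eq field_simps)
      finally show ?thesis .
    qed
    show "(\<lambda>n. inverse (real (Suc n))) \<longlonglongrightarrow> 0" by (rule LIMSEQ_inverse_real_of_nat)
  qed
  then obtain r w0 where "strict_mono r" and w0: "w0 \<in> G" "T w0 = 0"
    and lim: "(\<lambda>n. NG (w (r n) - w0)) \<longlonglongrightarrow> 0"
    by (rule bounded_graph_seq_limit[OF wG w_bounded Y.zero_mem])
  have "w0 \<in> kernel" unfolding kernel_def using w0 by simp
  then have "1 \<le> NG (w (r n) - w0)" for n by (rule far)
  moreover obtain M where "\<And>n. n \<ge> M \<Longrightarrow> NG (w (r n) - w0) < 1"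
    using tendsto_zero_eventually_less[OF lim] by (meson zero_less_one)
  ultimately show False by (meson le_refl not_le)
qed

lemma range_limit_in_range:
  fixes s :: "nat \<Rightarrow> 'a"
  assumes sE: "\<And>n. s n \<in> (\<Union>j. Es j)" and sY: "\<And>n. T (s n) \<in> Y" and y: "y \<in> Y"
    and lim_y: "(\<lambda>n. NY (T (s n) - y)) \<longlonglongrightarrow> 0"
  shows "\<exists>u\<in>(\<Union>j. Es j). T u = y"
proof -
  have sG: "s n \<in> G" for n using sE[of n] E_subset_X sY[of n] GI by blast
  obtain C where C: "\<forall>u\<in>G. dist_kernel u \<le> C * NY (T u)" using dist_kernel_bound by blast
  obtain M where M: "\<And>n. n \<ge> M \<Longrightarrow> NY (T (s n) - y) < 1"
    using tendsto_zero_eventually_less[OF lim_y] by (meson zero_less_one)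
  define s' where "s' n = s (n + M)" for n
  have s'G: "s' n \<in> G" for n unfolding s'_def by (rule sG)
  have "\<exists>k\<in>kernel. NG (s' n - k) < dist_kernel (s' n) + 1" for n
    by (rule dist_kernel_approx[OF s'G]) simp
  then obtain k where k: "\<And>n. k n \<in> kernel" and k_lt: "\<And>n. NG (s' n - k n) < dist_kernel (s' n) + 1"
    by metis
  define w where "w n = s' n - k n" for n
  have wG: "w n \<in> G" for n unfolding w_def by (rule G_diff[OF s'G kernel_G[OF k]])
  have Tw: "T (w n) = T (s' n)" for n
    unfolding w_def using T_diff[OF G_X[OF s'G] G_X[OF kernel_G[OF k]]] kernel_T[OF k] by simp
  have "NG (w n) \<le> \<bar>C\<bar> * (NY y + 1) + 1" for n
  proof -
    have "NY (T (s' n)) \<le> NY y + NY (T (s' n) - y)" by (rule Y.norm_le_add_diff[OF G_Y[OF s'G] y])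
    moreover have "NY (T (s' n) - y) < 1" unfolding s'_def by (rule M) simp
    ultimately have "NY (T (s' n)) \<le> NY y + 1" by simp
    then have "\<bar>C\<bar> * NY (T (s' n)) \<le> \<bar>C\<bar> * (NY y + 1)"
      by (rule mult_left_mono) simp
    moreover have "C * NY (T (s' n)) \<le> \<bar>C\<bar> * NY (T (s' n))"
      using Y.norm_nonneg[OF G_Y[OF s'G]] by (simp add: mult_right_mono)
    moreover have "dist_kernel (s' n) \<le> C * NY (T (s' n))" using C s'G by blast
    ultimately have "dist_kernel (s' n) \<le> \<bar>C\<bar> * (NY y + 1)" by linarith
    then show ?thesis using k_lt[of n] unfolding w_def by simp
  qed
  moreover have "(\<lambda>n. NY (T (w n) - y)) \<longlonglongrightarrow> 0"
    unfolding Tw s'_def using LIMSEQ_ignore_initial_segment[OF lim_y, of M] .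
  ultimately obtain r w0 where "strict_mono r" "w0 \<in> G" "T w0 = y"
    and "(\<lambda>n. NG (w (r n) - w0)) \<longlonglongrightarrow> 0"
    by (rule bounded_graph_seq_limit[OF wG _ y])
  then show ?thesis using property_H G_X G_Y by blast
qed

end

lemma closed_graph_if_continuous:
  fixes s :: "nat \<Rightarrow> 'a::real_vector" and T :: "'a \<Rightarrow> 'b::real_vector"
  assumes X: "banach_subspace X NX" and Y: "banach_subspace Y NY"
    and XA: "continuous_map (norm_topology X NX) tA id" and T: "continuous_map tA tZ T"
    and YZ: "continuous_map (norm_topology Y NY) tZ id" and Z: "Hausdorff_space tZ"
    and s: "\<And>n. s n \<in> X" "\<And>n. T (s n) \<in> Y" and u: "u \<in> X" and v: "v \<in> Y"
    and lim_X: "(\<lambda>n. NX (s n - u)) \<longlonglongrightarrow> 0" and lim_Y: "(\<lambda>n. NY (T (s n) - v)) \<longlonglongrightarrow> 0"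
  shows "T u = v"
proof -
  have "limitin (norm_topology X NX) s u sequentially"
    using banach_subspace.limitin_norm_topology_iff[OF X s(1)] u lim_X by simp
  then have "limitin tZ (T \<circ> (id \<circ> s)) (T (id u)) sequentially"
    by (intro continuous_map_limit[OF T] continuous_map_limit[OF XA])
  moreover have "limitin (norm_topology Y NY) (\<lambda>n. T (s n)) v sequentially"
    using banach_subspace.limitin_norm_topology_iff[OF Y s(2)] v lim_Y by simp
  then have "limitin tZ (id \<circ> (\<lambda>n. T (s n))) (id v) sequentially"
    by (rule continuous_map_limit[OF YZ])
  ultimately show ?thesis
    by (intro limitin_Hausdorff_unique[OF _ _ trivial_limit_sequentially Z]) (simp_all add: comp_def)
qed

lemma DFS_limitD:
  assumes "DFS_limit E tau Bs Ns"
  shows "dfs_sequence Bs Ns" "E = (\<Union>j. Bs j)" "tau = lc_inductive_limit Bs Ns"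
  using assms unfolding DFS_limit_def dfs_sequence_def by blast+

lemma closed_range_setting_step:
  fixes T :: "'a::real_vector \<Rightarrow> 'b::real_vector"
  assumes E: "dfs_sequence Es NE" and Esh: "dfs_sequence Eshk NEsh" and F: "dfs_sequence Fk NF"
    and Fsh: "Hausdorff_space tFsh" "continuous_map (lc_inductive_limit Fk NF) tFsh id"
    and E_Esh0: "continuous_map (lc_inductive_limit Es NE) (norm_topology (Eshk 0) (NEsh 0)) id"
    and linear: "is_linear_on (\<Union>k. Eshk k) T"
    and continuous: "continuous_map (lc_inductive_limit Eshk NEsh) tFsh T"
    and H: "\<forall>u\<in>(\<Union>k. Eshk k). T u \<in> (\<Union>k. Fk k) \<longrightarrow> u \<in> (\<Union>j. Es j)"
  shows "closed_range_setting (Eshk 0) (NEsh 0) (Fk p) (NF p) T Es NE"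
proof (rule closed_range_setting.intro)
  show "banach_subspace (Eshk 0) (NEsh 0)" "banach_subspace (Fk p) (NF p)"
    using dfs_sequence.banach_subspace_step[OF Esh] dfs_sequence.banach_subspace_step[OF F] .
  show "dfs_sequence Es NE" by (rule E)
  have Esh0: "Eshk 0 \<subseteq> (\<Union>k. Eshk k)" by blast
  show "T (x + y) = T x + T y" if "x \<in> Eshk 0" "y \<in> Eshk 0" for x y
    using linear Esh0 that unfolding is_linear_on_def by (meson subsetD)
  show "T (c *\<^sub>R x) = c *\<^sub>R T x" if "x \<in> Eshk 0" for c x
    using linear Esh0 that unfolding is_linear_on_def by (meson subsetD)
  show "T u = v" if "\<And>n. s n \<in> Eshk 0" "\<And>n. T (s n) \<in> Fk p" "u \<in> Eshk 0" "v \<in> Fk p"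
    "(\<lambda>n. NEsh 0 (s n - u)) \<longlonglongrightarrow> 0" "(\<lambda>n. NF p (T (s n) - v)) \<longlonglongrightarrow> 0" for s :: "nat \<Rightarrow> 'a" and u v
    using continuous_map_compose[OF dfs_sequence.continuous_map_step_inclusion[OF F] Fsh(2)]
    by (intro closed_graph_if_continuous[OF dfs_sequence.banach_subspace_step[OF Esh]
        dfs_sequence.banach_subspace_step[OF F] dfs_sequence.continuous_map_step_inclusion[OF Esh]
        continuous _ Fsh(1) that]) simp
  show "continuous_map (norm_topology (Es j) (NE j)) (norm_topology (Eshk 0) (NEsh 0)) id" for j
    using continuous_map_compose[OF dfs_sequence.continuous_map_step_inclusion[OF E] E_Esh0] by simp
  show "u \<in> (\<Union>j. Es j)" if "u \<in> Eshk 0" "T u \<in> Fk p" for u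
  proof -
    have "u \<in> (\<Union>k. Eshk k)" "T u \<in> (\<Union>k. Fk k)" using that by blast+
    with H show ?thesis by blast
  qed
qed

lemma stepwise_seq_closed_range:
  fixes T :: "'a::real_vector \<Rightarrow> 'b::real_vector"
  assumes F: "dfs_sequence Fk NF"
    and setting: "\<And>p. closed_range_setting X NX (Fk p) (NF p) T Es NE"
  shows "dfs_sequence.stepwise_seq_closed Fk NF (T ` (\<Union>j. Es j))"
  unfolding dfs_sequence.stepwise_seq_closed_def[OF F]
proof (intro allI impI)
  fix p z and s :: "nat \<Rightarrow> 'b"
  assume s: "\<forall>n. s n \<in> T ` (\<Union>j. Es j) \<inter> Fk p" and z: "z \<in> Fk p"
    and lim: "(\<lambda>n. NF p (s n - z)) \<longlonglongrightarrow> 0"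
  have "s n \<in> T ` (\<Union>j. Es j)" for n using s by blast
  then have "\<forall>n. \<exists>u. u \<in> (\<Union>j. Es j) \<and> T u = s n" unfolding image_iff by metis
  then obtain u where u: "\<And>n. u n \<in> (\<Union>j. Es j)" and Tu: "\<And>n. T (u n) = s n" by metis
  have "T (u n) \<in> Fk p" for n using s Tu by simp
  moreover have "(\<lambda>n. NF p (T (u n) - z)) \<longlonglongrightarrow> 0" using lim Tu by simp
  ultimately have "\<exists>v\<in>(\<Union>j. Es j). T v = z"
    by (rule closed_range_setting.range_limit_in_range[OF setting u _ z])
  then show "z \<in> T ` (\<Union>j. Es j)" by blast
qed

theorem mainTheorem11:
  fixes T :: "'a::real_vector \<Rightarrow> 'b::real_vector"
    and E Esh :: "'a set" and tE tEsh :: "'a topology"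
    and Ej Eshk :: "nat \<Rightarrow> 'a set" and NE NEsh :: "nat \<Rightarrow> 'a \<Rightarrow> real"
    and F Fsh :: "'b set" and tF tFsh :: "'b topology"
    and Fk :: "nat \<Rightarrow> 'b set" and NF :: "nat \<Rightarrow> 'b \<Rightarrow> real"
  assumes dfsE: "DFS_limit E tE Ej NE"
    and dfsEsh: "DFS_limit Esh tEsh Eshk NEsh"
    and dfsF: "DFS_limit F tF Fk NF"
    and tvsFsh: "hausdorff_tvs Fsh tFsh"
    and pairE: "E \<subseteq> Esh" "continuous_map tE tEsh id"
    and pairF: "F \<subseteq> Fsh" "continuous_map tF tFsh id"
    and E_in_Esh0: "E \<subseteq> Eshk 0" "continuous_map tE (norm_topology (Eshk 0) (NEsh 0)) id"
    and linT: "is_linear_on Esh T"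
    and contT: "T ` Esh \<subseteq> Fsh" "continuous_map tEsh tFsh T"
    and contT_E: "T ` E \<subseteq> F" "continuous_map tE tF T"
    and propH: "\<forall>u\<in>Esh. T u \<in> F \<longrightarrow> u \<in> E"
  shows "closedin tF (T ` E)"
proof -
  note E = DFS_limitD[OF dfsE] and Esh = DFS_limitD[OF dfsEsh] and F = DFS_limitD[OF dfsF]
  have "closed_range_setting (Eshk 0) (NEsh 0) (Fk p) (NF p) T Ej NE" for p
    using tvsFsh pairF(2) E_in_Esh0(2) linT contT(2) propH unfolding E(2,3) Esh(2,3) F(2,3)
    by (intro closed_range_setting_step[OF E(1) Esh(1) F(1)]) (simp_all add: hausdorff_tvs_def)
  then have "dfs_sequence.stepwise_seq_closed Fk NF (T ` E)"
    unfolding E(2) by (rule stepwise_seq_closed_range[OF F(1)])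
  then show ?thesis
    using dfs_sequence.closedin_if_stepwise_seq_closed[OF F(1)] contT_E(1) unfolding F(2,3) by blast
qed

end
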